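(* Let $u_0 \in L^\infty(\mathbb{R})\cap BV(\mathbb{R})$, $c > \|u_0\|_{L^\infty}$, $v_0 = u_0^2/2$, $a_0 = v_0 - c u_0$, $b_0 = v_0 + c u_0$, and let $(a^\varepsilon, b^\varepsilon)$ be the solution of the diagonal system $$\partial_t a - c\,\partial_x a = \frac{1}{\varepsilon} G(a,b), \qquad \partial_t b + c\,\partial_x b = \frac{1}{\varepsilon} G(a,b),$$ with initial data $(a_0,b_0)$, taking values in $[m,M]$. Then for every $k \in [m,M]$ the following entropy inequality holds in the sense of distributions on $(0,\infty)\times\mathbb{R}$: $$\partial_t\big(|a^\varepsilon - k| + |b^\varepsilon - h(k)|\big) - c\,\partial_x\big(|a^\varepsilon - k| - |b^\varepsilon - h(k)|\big) \leq 0 .$$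
   Context: Notation: $G(a,b) = \frac12\Big(\frac{b-a}{2c}\Big)^2 - \frac{a+b}{2}$; $U = \|u_0\|_{L^\infty}$, $m = U\big(\frac U2 - c\big)$, $M = U\big(\frac U2 + c\big)$; $h(a) = a + 2c^2 - 2c\sqrt{c^2 + 2a}$, so that $G(k,h(k)) = 0$ for all $k\in[m,M]$. The system is equivalent, via $a = v - cu$, $b = v + cu$, to $\partial_t u + \partial_x v = 0$, $\partial_t v + c^2\partial_x u = \frac1\varepsilon(\frac12 u^2 - v)$; the solution satisfies $|u^\varepsilon| \le U$ and $a^\varepsilon, b^\varepsilon \in [m,M]$ for all times. *)

theory Defs
  imports "HOL-Analysis.Analysis" "HOL-Probability.Essential_Supremum"
begin

definition G :: "real \<Rightarrow> real \<Rightarrow> real \<Rightarrow> real" where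
  "G c a b = (1/2) * ((b - a) / (2*c))^2 - (a + b) / 2"

definition h :: "real \<Rightarrow> real \<Rightarrow> real" where
  "h c a = a + 2*c^2 - 2*c * sqrt (c^2 + 2*a)"

definition bounded_variation :: "(real \<Rightarrow> real) \<Rightarrow> bool" where
  "bounded_variation f \<longleftrightarrow>
     (\<exists>V. \<forall>xs. sorted xs \<longrightarrow>
        (\<Sum>i<length xs - 1. \<bar>f (xs ! Suc i) - f (xs ! i)\<bar>) \<le> V)"

text \<open>BV(R) as a class of a.e.-equal functions: some representative has finite
  pointwise total variation.\<close>
definition BV :: "(real \<Rightarrow> real) \<Rightarrow> bool" where
  "BV f \<longleftrightarrow> (\<exists>g. bounded_variation g \<and> (AE x in lborel. f x = g x))"

text \<open>C^k functions on R^2 = real \<times> real (coordinates (t,x)), via partial derivatives.\<close>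
fun Ck :: "nat \<Rightarrow> (real \<times> real \<Rightarrow> real) \<Rightarrow> bool" where
  "Ck 0 f = continuous_on UNIV f"
| "Ck (Suc n) f = (\<exists>f1 f2. (\<forall>z. (f has_derivative (\<lambda>(s,y). s * f1 z + y * f2 z)) (at z))
                         \<and> Ck n f1 \<and> Ck n f2)"

definition smooth2 :: "(real \<times> real \<Rightarrow> real) \<Rightarrow> bool" where
  "smooth2 f \<longleftrightarrow> (\<forall>n. Ck n f)"

definition compact_support_in :: "(real \<times> real \<Rightarrow> real) \<Rightarrow> (real \<times> real) set \<Rightarrow> bool" where
  "compact_support_in f S \<longleftrightarrow> (\<exists>K. compact K \<and> K \<subseteq> S \<and> (\<forall>z. z \<notin> K \<longrightarrow> f z = 0))"

definition partials :: "(real \<times> real \<Rightarrow> real) \<Rightarrow> (real \<times> real \<Rightarrow> real) \<Rightarrow> (real \<times> real \<Rightarrow> real) \<Rightarrow> bool" where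
  "partials \<phi> \<phi>t \<phi>x \<longleftrightarrow> (\<forall>z. (\<phi> has_derivative (\<lambda>(s,y). s * \<phi>t z + y * \<phi>x z)) (at z))"

text \<open>Weak (distributional) solution on [0,\<infinity>) \<times> R of
  d_t w + lam d_x w = S(a,b) with w(0,.) = w0, tested against all
  C^\<infinity> functions with compact support in R^2 (i.e. C_c^\<infinity>([0,\<infinity>)\<times>R)).\<close>
definition weak_eq :: "real \<Rightarrow> (real \<times> real \<Rightarrow> real) \<Rightarrow> (real \<times> real \<Rightarrow> real) \<Rightarrow> (real \<Rightarrow> real) \<Rightarrow> bool" where
  "weak_eq lam w S w0 \<longleftrightarrow>
    (\<forall>\<phi> \<phi>t \<phi>x. smooth2 \<phi> \<and> compact_support_in \<phi> UNIV \<and> partials \<phi> \<phi>t \<phi>x \<longrightarrow>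
       (LINT z:{0..} \<times> UNIV|lborel. w z * \<phi>t z + lam * w z * \<phi>x z + S z * \<phi> z)
       + (LINT x|lborel. w0 x * \<phi> (0, x)) = 0)"

definition diag_solution :: "real \<Rightarrow> real \<Rightarrow> (real \<Rightarrow> real) \<Rightarrow> (real \<Rightarrow> real)
    \<Rightarrow> (real \<times> real \<Rightarrow> real) \<Rightarrow> (real \<times> real \<Rightarrow> real) \<Rightarrow> bool" where
  "diag_solution c \<epsilon> a0 b0 a b \<longleftrightarrow>
     a \<in> borel_measurable lborel \<and> b \<in> borel_measurable lborel \<and>
     weak_eq (-c) a (\<lambda>z. G c (a z) (b z) / \<epsilon>) a0 \<and>
     weak_eq c b (\<lambda>z. G c (a z) (b z) / \<epsilon>) b0"

end

theory Submission
  imports Defs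
begin

text \<open>The Riemann invariants \<open>a\<close> and \<open>b\<close> solve transport equations with speeds \<open>-c\<close> and \<open>c\<close> and the
  common bounded source \<open>S = G(a, b) / \<epsilon>\<close>. For such an equation \<open>w\<^sub>t + \<lambda> w\<^sub>x = S\<close>, testing with the
  integral of a test function along the characteristic segment of length \<open>q\<close> shows that almost
  everywhere \<open>w(z - q (1, \<lambda>)) - w(z) = - \<integral>\<^sub>0\<^sup>q S(z - r (1, \<lambda>)) dr\<close>. Convexity of \<open>\<bar>\<cdot> - k\<bar>\<close> turns
  this into an inequality between difference quotients, and letting \<open>q \<rightarrow> 0\<close> (Lebesgue differentiation
  along the characteristics) gives Kruzhkov's inequality
  \<open>\<partial>\<^sub>t \<bar>w - k\<bar> + \<lambda> \<partial>\<^sub>x \<bar>w - k\<bar> \<le> sgn (w - k) S\<close>. Adding it for \<open>(a, k)\<close> and \<open>(b, h(k))\<close>, the source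
  terms combine to \<open>(sgn (a - k) + sgn (b - h(k))) G(a, b) / \<epsilon> \<le> 0\<close>, because \<open>G(k, h(k)) = 0\<close> and \<open>G\<close>
  is decreasing in both arguments on \<open>[m, M]\<^sup>2\<close>.\<close>

section \<open>Smooth functions of \<open>(t, x)\<close>\<close>

declare Ck.simps(2)[simp del]

lemma Ck_SucI:
  assumes "\<And>z. (f has_derivative (\<lambda>(s,y). s * fa z + y * fb z)) (at z)" "Ck n fa" "Ck n fb"
  shows "Ck (Suc n) f"
  using assms unfolding Ck.simps(2) by blast

lemma Ck_SucE:
  assumes "Ck (Suc n) f"
  obtains f1 f2 where "\<And>z. (f has_derivative (\<lambda>(s,y). s * f1 z + y * f2 z)) (at z)"
    "Ck n f1" "Ck n f2"
  using assms unfolding Ck.simps(2) by blast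

lemma Ck_imp_continuous: "Ck n f \<Longrightarrow> continuous_on UNIV f"
  by (cases n) (auto elim!: Ck_SucE intro: continuous_at_imp_continuous_on has_derivative_continuous)

lemma Ck_Suc_imp_Ck: "Ck (Suc n) f \<Longrightarrow> Ck n f"
proof (induction n arbitrary: f)
  case 0
  then show ?case using Ck_imp_continuous by simp
next
  case (Suc n)
  then show ?case by (auto elim!: Ck_SucE intro!: Ck_SucI)
qed

lemma Ck_const: "Ck n (\<lambda>z. c)"
  by (induction n arbitrary: c) (auto intro!: Ck_SucI[where fa="\<lambda>z. 0" and fb="\<lambda>z. 0"] derivative_eq_intros)

lemma Ck_fst: "Ck n fst"
  by (cases n) (auto intro!: Ck_SucI[where fa="\<lambda>z. 1" and fb="\<lambda>z. 0"] derivative_eq_intros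
      Ck_const continuous_on_fst simp: case_prod_beta)

lemma Ck_snd: "Ck n snd"
  by (cases n) (auto intro!: Ck_SucI[where fa="\<lambda>z. 0" and fb="\<lambda>z. 1"] derivative_eq_intros
      Ck_const continuous_on_snd simp: case_prod_beta)

lemma Ck_add: "Ck n f \<Longrightarrow> Ck n g \<Longrightarrow> Ck n (\<lambda>z. f z + g z)"
proof (induction n arbitrary: f g)
  case 0
  then show ?case by (auto intro: continuous_on_add)
next
  case (Suc n)
  obtain f1 f2 where f: "\<And>z. (f has_derivative (\<lambda>(s,y). s * f1 z + y * f2 z)) (at z)"
    "Ck n f1" "Ck n f2" using Suc.prems(1) by (erule Ck_SucE)
  obtain g1 g2 where g: "\<And>z. (g has_derivative (\<lambda>(s,y). s * g1 z + y * g2 z)) (at z)"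
    "Ck n g1" "Ck n g2" using Suc.prems(2) by (erule Ck_SucE)
  show ?case
  proof (rule Ck_SucI[where fa="\<lambda>z. f1 z + g1 z" and fb="\<lambda>z. f2 z + g2 z"])
    show "((\<lambda>z. f z + g z) has_derivative (\<lambda>(s, y). s * (f1 z + g1 z) + y * (f2 z + g2 z))) (at z)" for z
      using has_derivative_add[OF f(1) g(1)]
      by (rule has_derivative_eq_rhs) (auto simp: algebra_simps case_prod_beta)
  qed (use f g Suc.IH in auto)
qed

lemma Ck_mult: "Ck n f \<Longrightarrow> Ck n g \<Longrightarrow> Ck n (\<lambda>z. f z * g z)"
proof (induction n arbitrary: f g)
  case 0
  then show ?case by (auto intro: continuous_on_mult)
next
  case (Suc n)
  obtain f1 f2 where f: "\<And>z. (f has_derivative (\<lambda>(s,y). s * f1 z + y * f2 z)) (at z)"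
    "Ck n f1" "Ck n f2" using Suc.prems(1) by (erule Ck_SucE)
  obtain g1 g2 where g: "\<And>z. (g has_derivative (\<lambda>(s,y). s * g1 z + y * g2 z)) (at z)"
    "Ck n g1" "Ck n g2" using Suc.prems(2) by (erule Ck_SucE)
  have "Ck n f" "Ck n g" using Suc.prems by (auto intro: Ck_Suc_imp_Ck)
  then show ?case
  proof (intro Ck_SucI[where fa="\<lambda>z. f1 z * g z + f z * g1 z" and fb="\<lambda>z. f2 z * g z + f z * g2 z"])
    show "((\<lambda>z. f z * g z) has_derivative
        (\<lambda>(s, y). s * (f1 z * g z + f z * g1 z) + y * (f2 z * g z + f z * g2 z))) (at z)" for z
      using has_derivative_mult[OF f(1) g(1)]
      by (rule has_derivative_eq_rhs) (auto simp: algebra_simps case_prod_beta)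
  qed (use f g Suc.IH Ck_add in auto)
qed

lemma smooth2_add: "smooth2 f \<Longrightarrow> smooth2 g \<Longrightarrow> smooth2 (\<lambda>z. f z + g z)"
  by (auto simp: smooth2_def intro: Ck_add)

lemma smooth2_mult: "smooth2 f \<Longrightarrow> smooth2 g \<Longrightarrow> smooth2 (\<lambda>z. f z * g z)"
  by (auto simp: smooth2_def intro: Ck_mult)

lemma smooth2_imp_continuous: "smooth2 f \<Longrightarrow> continuous_on UNIV f"
  by (auto simp: smooth2_def intro: Ck_imp_continuous)

lemma bounded_linear_real_pair_eq:
  fixes l :: "real \<times> real \<Rightarrow> real"
  assumes "bounded_linear l"
  shows "l = (\<lambda>z. fst z * l (1,0) + snd z * l (0,1))"
proof
  fix z :: "real \<times> real"
  interpret linear l using assms by (rule bounded_linear.linear)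
  have "z = fst z *\<^sub>R (1,0) + snd z *\<^sub>R (0,1)" by simp
  then show "l z = fst z * l (1,0) + snd z * l (0,1)"
    by (metis add scale real_scaleR_def)
qed

lemma smooth2_polynomial:
  assumes "real_polynomial_function (p :: real \<times> real \<Rightarrow> real)"
  shows "smooth2 p"
  using assms
proof induction
  case (linear f)
  then show ?case
    by (subst bounded_linear_real_pair_eq[OF linear])
      (auto simp: smooth2_def intro!: Ck_add Ck_mult Ck_fst Ck_snd Ck_const)
next
  case (const c)
  then show ?case by (auto simp: smooth2_def intro: Ck_const)
qed (auto intro: smooth2_add smooth2_mult)

lemma partials_unique:
  assumes "partials f ft fx" "partials f ft' fx'"
  shows "ft = ft'" "fx = fx'"
proof -
  have "(\<lambda>(s,y). s * ft z + y * fx z) = (\<lambda>(s,y). s * ft' z + y * fx' z)" for z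
    using assms unfolding partials_def by (metis has_derivative_unique)
  from fun_cong[OF this, of _ "(1,0)"] fun_cong[OF this, of _ "(0,1)"]
  show "ft = ft'" "fx = fx'" by auto
qed

lemma smooth2_partials:
  assumes "smooth2 f" "partials f ft fx"
  shows "smooth2 ft" "smooth2 fx"
proof -
  have "Ck n ft \<and> Ck n fx" for n
  proof -
    have "Ck (Suc n) f" using assms(1) by (simp add: smooth2_def)
    then obtain fa fb where "\<And>z. (f has_derivative (\<lambda>(s,y). s * fa z + y * fb z)) (at z)"
      "Ck n fa" "Ck n fb" by (erule Ck_SucE)
    moreover from this(1) have "partials f fa fb" by (simp add: partials_def)
    ultimately show ?thesis using partials_unique[OF assms(2)] by simp
  qed
  then show "smooth2 ft" "smooth2 fx" by (auto simp: smooth2_def)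
qed

lemma smooth2_partialsE:
  assumes "smooth2 f"
  obtains ft fx where "partials f ft fx"
proof -
  have "Ck (Suc 0) f" using assms by (simp add: smooth2_def)
  then obtain fa fb where "\<And>z. (f has_derivative (\<lambda>(s,y). s * fa z + y * fb z)) (at z)"
    by (elim Ck_SucE) blast
  then show ?thesis using that unfolding partials_def by blast
qed

lemma partials_vanish_outside:
  assumes "partials f ft fx" "closed K" "\<And>z. z \<notin> K \<Longrightarrow> f z = 0" "x \<notin> K"
  shows "ft x = 0" "fx x = 0"
proof -
  have "((\<lambda>_. 0) has_derivative (\<lambda>_. 0)) (at x)" by simp
  then have "(f has_derivative (\<lambda>_. 0)) (at x)"
    by (rule has_derivative_transform_within_open[of _ _ x UNIV "- K"]) (use assms in auto)
  then have "(\<lambda>(s,y). s * ft x + y * fx x) = (\<lambda>_. 0::real)"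
    using assms(1) has_derivative_unique unfolding partials_def by metis
  from fun_cong[OF this, of "(1,0)"] fun_cong[OF this, of "(0,1)"]
  show "ft x = 0" "fx x = 0" by auto
qed

definition ray_integral :: "real \<Rightarrow> real \<times> real \<Rightarrow> (real \<times> real \<Rightarrow> real) \<Rightarrow> real \<times> real \<Rightarrow> real" where
  "ray_integral q v f z = integral {0..q} (\<lambda>r. f (z + r *\<^sub>R v))"

lemma integrable_on_ray:
  fixes f :: "real \<times> real \<Rightarrow> real"
  assumes "continuous_on UNIV f"
  shows "(\<lambda>r. f (z + r *\<^sub>R v)) integrable_on {a..b}"
  by (intro integrable_continuous_interval continuous_on_compose2[OF assms]) (auto intro!: continuous_intros)

lemma has_derivative_ray_integral:
  assumes f: "\<And>z. (f has_derivative (\<lambda>(s,y). s * fa z + y * fb z)) (at z)"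
    and fa: "continuous_on UNIV fa" and fb: "continuous_on UNIV fb"
  shows "(ray_integral q v f has_derivative
           (\<lambda>(s,y). s * ray_integral q v fa z + y * ray_integral q v fb z)) (at z)"
proof -
  define D where "D x r = fa (x + r *\<^sub>R v) *\<^sub>R fst_blinfun
      + fb (x + r *\<^sub>R v) *\<^sub>R (snd_blinfun :: (real \<times> real) \<Rightarrow>\<^sub>L real)" for x r
  have D_apply: "blinfun_apply (D x r) = (\<lambda>(s,y). s * fa (x + r *\<^sub>R v) + y * fb (x + r *\<^sub>R v))" for x r
    by (auto simp: D_def blinfun.bilinear_simps fun_eq_iff)
  have "continuous_on UNIV f"
    using f by (metis continuous_at_imp_continuous_on has_derivative_continuous)
  then have leibniz: "((\<lambda>x. integral (cbox 0 q) (\<lambda>r. f (x + r *\<^sub>R v))) has_derivative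
      integral (cbox 0 q) (D z)) (at z within UNIV)"
  proof (intro leibniz_rule)
    fix x r
    have "((\<lambda>x. x + r *\<^sub>R v) has_derivative (\<lambda>h. h)) (at x)" by (auto intro!: derivative_eq_intros)
    from has_derivative_compose[OF this f]
    show "((\<lambda>x. f (x + r *\<^sub>R v)) has_derivative blinfun_apply (D x r)) (at x within UNIV)"
      by (simp add: o_def D_apply)
    show "continuous_on (UNIV \<times> cbox 0 q) (\<lambda>(x, r). D x r)"
      unfolding D_def by (auto simp: split_beta intro!: continuous_intros
          continuous_on_compose2[OF fa] continuous_on_compose2[OF fb])
  qed (auto simp: integrable_on_ray)
  have scale: "integral {0..q} (\<lambda>r. g (z + r *\<^sub>R v) *\<^sub>R L) = ray_integral q v g z *\<^sub>R L"
    if "continuous_on UNIV g" for g and L :: "(real \<times> real) \<Rightarrow>\<^sub>L real"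
    unfolding ray_integral_def
    by (rule integral_unique[OF has_integral_scaleR_left[OF integrable_integral[OF integrable_on_ray[OF that]]]])
  have "integral (cbox 0 q) (D z) = ray_integral q v fa z *\<^sub>R fst_blinfun
      + ray_integral q v fb z *\<^sub>R snd_blinfun"
    unfolding D_def
    by (subst integral_add) (auto intro!: integrable_on_scaleR_left integrable_on_ray fa fb
        simp: scale[OF fa] scale[OF fb])
  then have "blinfun_apply (integral (cbox 0 q) (D z))
      = (\<lambda>(s,y). s * ray_integral q v fa z + y * ray_integral q v fb z)"
    by (auto simp: blinfun.bilinear_simps fun_eq_iff)
  with leibniz show ?thesis by (simp add: ray_integral_def[abs_def])
qed

lemma Ck_ray_integral: "Ck (Suc n) f \<Longrightarrow> Ck n (ray_integral q v f)"
proof (induction n arbitrary: f)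
  case 0
  then obtain fa fb where "\<And>z. (f has_derivative (\<lambda>(s,y). s * fa z + y * fb z)) (at z)"
    "Ck 0 fa" "Ck 0 fb" by (erule Ck_SucE)
  then have "(ray_integral q v f has_derivative
      (\<lambda>(s,y). s * ray_integral q v fa z + y * ray_integral q v fb z)) (at z)" for z
    by (intro has_derivative_ray_integral) auto
  then show ?case
    by (simp only: Ck.simps(1)) (metis continuous_at_imp_continuous_on has_derivative_continuous)
next
  case (Suc n)
  from Suc.prems obtain fa fb where "\<And>z. (f has_derivative (\<lambda>(s,y). s * fa z + y * fb z)) (at z)"
    "Ck (Suc n) fa" "Ck (Suc n) fb" by (erule Ck_SucE)
  with Suc.IH show ?case
    by (intro Ck_SucI[where fa="ray_integral q v fa" and fb="ray_integral q v fb"]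
        has_derivative_ray_integral) (auto intro: Ck_imp_continuous)
qed

lemma smooth2_ray_integral: "smooth2 f \<Longrightarrow> smooth2 (ray_integral q v f)"
  by (auto simp: smooth2_def intro: Ck_ray_integral)

lemma partials_ray_integral:
  assumes "smooth2 f" "partials f ft fx"
  shows "partials (ray_integral q v f) (ray_integral q v ft) (ray_integral q v fx)"
  using assms smooth2_partials[OF assms] unfolding partials_def
  by (intro allI has_derivative_ray_integral) (auto intro: smooth2_imp_continuous)

lemma ray_integral_partials:
  assumes p: "partials f ft fx" and c: "continuous_on UNIV ft" "continuous_on UNIV fx" and q: "q \<ge> 0"
  shows "fst v * ray_integral q v ft z + snd v * ray_integral q v fx z = f (z + q *\<^sub>R v) - f z"
proof -
  have "((\<lambda>r. f (z + r *\<^sub>R v)) has_vector_derivative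
      (fst v * ft (z + r *\<^sub>R v) + snd v * fx (z + r *\<^sub>R v))) (at r within {0..q})" for r
  proof -
    have "((\<lambda>r. z + r *\<^sub>R v) has_derivative (\<lambda>h. h *\<^sub>R v)) (at r within {0..q})"
      by (auto intro!: derivative_eq_intros)
    from has_derivative_compose[OF this p[unfolded partials_def, rule_format]]
    show ?thesis unfolding has_vector_derivative_def o_def
      by (rule has_derivative_eq_rhs) (auto simp: fun_eq_iff algebra_simps case_prod_beta)
  qed
  then have "((\<lambda>r. fst v * ft (z + r *\<^sub>R v) + snd v * fx (z + r *\<^sub>R v))
      has_integral (f (z + q *\<^sub>R v) - f (z + 0 *\<^sub>R v))) {0..q}"
    by (intro fundamental_theorem_of_calculus[OF q]) auto
  then have "((\<lambda>r. fst v * ft (z + r *\<^sub>R v) + snd v * fx (z + r *\<^sub>R v))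
      has_integral (f (z + q *\<^sub>R v) - f z)) {0..q}"
    by simp
  moreover have "integral {0..q} (\<lambda>r. fst v * ft (z + r *\<^sub>R v) + snd v * fx (z + r *\<^sub>R v))
      = fst v * ray_integral q v ft z + snd v * ray_integral q v fx z"
    unfolding ray_integral_def using integrable_on_ray[OF c(1)] integrable_on_ray[OF c(2)]
    by (simp add: integral_add integrable_on_mult_right)
  ultimately show ?thesis by (simp add: integral_unique)
qed

definition swept_set :: "(real \<times> real) set \<Rightarrow> real \<times> real \<Rightarrow> real \<Rightarrow> (real \<times> real) set" where
  "swept_set K v q = (\<lambda>(y, r). y - r *\<^sub>R v) ` (K \<times> {0..q})"

lemma swept_setI: "x + r *\<^sub>R v \<in> K \<Longrightarrow> 0 \<le> r \<Longrightarrow> r \<le> q \<Longrightarrow> x \<in> swept_set K v q"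
  unfolding swept_set_def by (rule rev_image_eqI[of "(x + r *\<^sub>R v, r)"]) auto

lemma compact_swept_set: "compact K \<Longrightarrow> compact (swept_set K v q)"
  unfolding swept_set_def
  by (intro compact_continuous_image compact_Times compact_Icc) (auto simp: case_prod_beta intro!: continuous_intros)

lemma ray_integral_vanishes:
  assumes "\<And>z. z \<notin> K \<Longrightarrow> f z = 0" "x \<notin> swept_set K v q"
  shows "ray_integral q v f x = 0"
proof -
  have "f (x + r *\<^sub>R v) = 0" if "r \<in> {0..q}" for r
    using assms(2) swept_setI[of x r v K q] that by (intro assms(1)) auto
  then have "ray_integral q v f x = integral {0..q} (\<lambda>r. 0)"
    unfolding ray_integral_def by (intro integral_cong) auto
  then show ?thesis by simp
qed

lemma abs_ray_integral_le:
  assumes "continuous_on UNIV f" "\<And>z. \<bar>f z\<bar> \<le> C" "q \<ge> 0"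
  shows "\<bar>ray_integral q v f z\<bar> \<le> C * q"
proof -
  have "C \<ge> 0" using assms(2)[of 0] by linarith
  then have "norm (integral (cbox 0 q) (\<lambda>r. f (z + r *\<^sub>R v))) \<le> C * Henstock_Kurzweil_Integration.content (cbox 0 q)"
    using integrable_on_ray[OF assms(1)] assms(2)
    by (intro Henstock_Kurzweil_Integration.integrable_bound) auto
  then show ?thesis using assms(3) by (simp add: ray_integral_def)
qed

lemma ray_integral_eq_lebesgue:
  assumes "continuous_on UNIV f"
  shows "ray_integral q v f z = (\<integral>r. indicator {0..q} r * f (z + r *\<^sub>R v) \<partial>lborel)"
proof -
  have "continuous_on {0..q} (\<lambda>r. f (z + r *\<^sub>R v))"
    by (intro continuous_on_compose2[OF assms]) (auto intro!: continuous_intros)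
  from set_borel_integral_eq_integral(2)[OF borel_integrable_atLeastAtMost'[OF this]]
  show ?thesis by (simp add: ray_integral_def set_lebesgue_integral_def)
qed

definition bounded_compact_support :: "('a::euclidean_space \<Rightarrow> real) \<Rightarrow> bool" where
  "bounded_compact_support f \<longleftrightarrow> f \<in> borel_measurable borel \<and> (\<exists>C. \<forall>z. \<bar>f z\<bar> \<le> C)
     \<and> (\<exists>K. compact K \<and> (\<forall>z. z \<notin> K \<longrightarrow> f z = 0))"

lemma bounded_compact_supportI:
  assumes "f \<in> borel_measurable borel" "compact K" "\<And>z. z \<notin> K \<Longrightarrow> f z = 0" "\<And>z. \<bar>f z\<bar> \<le> C"
  shows "bounded_compact_support f"
  using assms unfolding bounded_compact_support_def by blast

lemma bounded_compact_supportE: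
  assumes "bounded_compact_support f"
  obtains C K where "C \<ge> 0" "\<And>z. \<bar>f z\<bar> \<le> C" "compact K" "\<And>z. z \<notin> K \<Longrightarrow> f z = 0"
proof -
  obtain C K where "\<And>z. \<bar>f z\<bar> \<le> C" "compact K" "\<And>z. z \<notin> K \<Longrightarrow> f z = 0"
    using assms unfolding bounded_compact_support_def by blast
  moreover from this(1)[of 0] have "C \<ge> 0" by linarith
  ultimately show ?thesis using that by blast
qed

lemma bounded_compact_support_bound:
  "bounded_compact_support f \<Longrightarrow> \<exists>C\<ge>0. \<forall>z. \<bar>f z\<bar> \<le> C"
  by (elim bounded_compact_supportE) blast

lemma bounded_compact_support_measurable:
  "bounded_compact_support f \<Longrightarrow> f \<in> borel_measurable borel"
  unfolding bounded_compact_support_def by blast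

lemma bounded_compact_support_continuous:
  fixes f :: "'a::euclidean_space \<Rightarrow> real"
  assumes "continuous_on UNIV f" "compact K" "\<And>z. z \<notin> K \<Longrightarrow> f z = 0"
  shows "bounded_compact_support f"
proof -
  have "bounded (f ` K)"
    using assms(1,2) by (intro compact_imp_bounded compact_continuous_image) (auto intro: continuous_on_subset)
  then obtain C where "\<And>z. z \<in> K \<Longrightarrow> \<bar>f z\<bar> \<le> C"
    unfolding bounded_iff by auto
  then have "\<bar>f z\<bar> \<le> max C 0" for z using assms(3)[of z] by (cases "z \<in> K") (auto simp: le_max_iff_disj)
  with assms show ?thesis by (intro bounded_compact_supportI borel_measurable_continuous_onI)
qed

lemma integrable_bounded_compact_support:
  assumes "bounded_compact_support f"
  shows "integrable lborel f"
proof -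
  obtain C K where f: "C \<ge> 0" "\<And>z. \<bar>f z\<bar> \<le> C" "compact K" "\<And>z. z \<notin> K \<Longrightarrow> f z = 0"
    using assms by (rule bounded_compact_supportE) blast
  have "integrable lborel (\<lambda>z. C * indicator K z :: real)"
    using emeasure_compact_finite[OF f(3)] f(3)
    by (intro integrable_mult_right integrable_real_indicator) (auto intro: borel_compact)
  moreover have "f \<in> borel_measurable lborel"
    using bounded_compact_support_measurable[OF assms] by simp
  moreover have "AE z in lborel. norm (f z) \<le> norm (C * indicator K z :: real)"
  proof (rule AE_I2)
    show "norm (f z) \<le> norm (C * indicator K z :: real)" for z
      using f(2)[of z] f(4)[of z] by (cases "z \<in> K") auto
  qed
  ultimately show ?thesis by (rule Bochner_Integration.integrable_bound)
qed

lemma bounded_compact_support_mult: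
  assumes "bounded_compact_support f" "g \<in> borel_measurable borel" "\<And>z. \<bar>g z\<bar> \<le> D"
  shows "bounded_compact_support (\<lambda>z. f z * g z)" "bounded_compact_support (\<lambda>z. g z * f z)"
proof -
  obtain C K where f: "C \<ge> 0" "\<And>z. \<bar>f z\<bar> \<le> C" "compact K" "\<And>z. z \<notin> K \<Longrightarrow> f z = 0"
    using assms(1) by (rule bounded_compact_supportE) blast
  have "\<bar>f z * g z\<bar> \<le> C * D" for z
    unfolding abs_mult by (rule mult_mono[OF f(2) assms(3) f(1) abs_ge_zero])
  moreover have "(\<lambda>z. f z * g z) \<in> borel_measurable borel"
    using bounded_compact_support_measurable[OF assms(1)] assms(2) by (rule borel_measurable_times)
  ultimately show *: "bounded_compact_support (\<lambda>z. f z * g z)"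
    using f(3,4) by (intro bounded_compact_supportI[where K=K and C="C * D"]) auto
  then show "bounded_compact_support (\<lambda>z. g z * f z)" by (simp add: mult.commute)
qed

lemma borel_measurable_compose_continuous:
  "g \<in> borel_measurable borel \<Longrightarrow> continuous_on UNIV T \<Longrightarrow> (\<lambda>x. g (T x)) \<in> borel_measurable borel"
  by (rule measurable_compose[OF borel_measurable_continuous_onI])

lemma bounded_compact_support_compose:
  fixes f :: "'a::euclidean_space \<Rightarrow> real" and T :: "'b::euclidean_space \<Rightarrow> 'a"
  assumes f: "bounded_compact_support f" and T: "continuous_on UNIV T" "continuous_on UNIV T'"
    "\<And>z. T' (T z) = z"
  shows "bounded_compact_support (\<lambda>z. f (T z))"
proof -
  obtain C K where f': "C \<ge> 0" "\<And>z. \<bar>f z\<bar> \<le> C" "compact K" "\<And>z. z \<notin> K \<Longrightarrow> f z = 0"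
    using f by (rule bounded_compact_supportE) blast
  show ?thesis
  proof (rule bounded_compact_supportI[where K="T' ` K" and C=C])
    show "(\<lambda>z. f (T z)) \<in> borel_measurable borel"
      by (rule borel_measurable_compose_continuous[OF bounded_compact_support_measurable[OF f] T(1)])
    show "compact (T' ` K)" by (rule compact_continuous_image[OF continuous_on_subset[OF T(2)] f'(3)]) simp
    show "f (T z) = 0" if "z \<notin> T' ` K" for z
      using that T(3)[of z] by (intro f'(4)) (metis image_eqI)
  qed (rule f'(2))
qed

lemma bounded_compact_support_translate:
  fixes f :: "'a::euclidean_space \<Rightarrow> real"
  assumes "bounded_compact_support f"
  shows "bounded_compact_support (\<lambda>z. f (z + c))"
  by (rule bounded_compact_support_compose[OF assms, of _ "\<lambda>z. z - c"]) (auto intro: continuous_intros)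

lemma lborel_integral_translate:
  fixes f :: "'a::euclidean_space \<Rightarrow> real"
  assumes "f \<in> borel_measurable borel"
  shows "(\<integral>z. f (z + c) \<partial>lborel) = integral\<^sup>L lborel f"
proof -
  have "integral\<^sup>L lborel f = integral\<^sup>L (distr lborel borel ((+) c)) f"
    by (simp add: lborel_distr_plus)
  also have "\<dots> = (\<integral>z. f (c + z) \<partial>lborel)"
    using assms by (subst integral_distr) auto
  finally show ?thesis by (simp add: add.commute)
qed

lemma integrable_indicator_Icc: "integrable lborel (\<lambda>r::real. C * indicator {a..b} r :: real)"
  using emeasure_compact_finite[of "{a..b}"] by (intro integrable_mult_right integrable_real_indicator) auto

lemma lborel_integral_shear:
  fixes g :: "real \<times> real \<Rightarrow> real"
  assumes "bounded_compact_support g"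
  shows "integral\<^sup>L lborel g = (\<integral>y. \<integral>t. g (t, y + lam * t) \<partial>lborel \<partial>lborel)"
proof -
  have shear_cont: "continuous_on UNIV (\<lambda>p::real \<times> real. (fst p, snd p + lam * fst p))"
    by (auto intro!: continuous_intros)
  have "integrable lborel g" by (rule integrable_bounded_compact_support[OF assms])
  then have i1: "integrable (lborel \<Otimes>\<^sub>M lborel) g" by (simp add: lborel_prod)
  have "bounded_compact_support (\<lambda>p. g (fst p, snd p + lam * fst p))"
    by (rule bounded_compact_support_compose[OF assms shear_cont, of "\<lambda>p. (fst p, snd p - lam * fst p)"])
      (auto intro!: continuous_intros)
  then have i2: "integrable (lborel \<Otimes>\<^sub>M lborel) (\<lambda>(t, y). g (t, y + lam * t))"
    unfolding lborel_prod case_prod_beta by (rule integrable_bounded_compact_support)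
  have "integral\<^sup>L lborel g = (\<integral>t. \<integral>x. g (t, x) \<partial>lborel \<partial>lborel)"
    using lborel_pair.integral_fst'[OF i1] by (simp add: lborel_prod)
  also have "\<dots> = (\<integral>t. \<integral>y. g (t, y + lam * t) \<partial>lborel \<partial>lborel)"
  proof (rule Bochner_Integration.integral_cong[OF refl])
    show "(\<integral>x. g (t, x) \<partial>lborel) = (\<integral>y. g (t, y + lam * t) \<partial>lborel)" for t
      using lborel_integral_real_affine[of 1 "\<lambda>x. g (t, x)" "lam * t"] by (simp add: add.commute)
  qed
  also have "\<dots> = (\<integral>y. \<integral>t. g (t, y + lam * t) \<partial>lborel \<partial>lborel)"
    by (rule lborel_pair.Fubini_integral[OF i2, symmetric])
  finally show ?thesis .
qed

section \<open>The fundamental lemma of the calculus of variations\<close>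

lemma real_eq_0_if_abs_le_epsilon:
  fixes x A :: real
  assumes "A \<ge> 0" "\<And>e. e > 0 \<Longrightarrow> \<bar>x\<bar> \<le> A * e"
  shows "x = 0"
proof -
  have "\<bar>x\<bar> \<le> 0 + e" if "e > 0" for e
  proof -
    have "\<bar>x\<bar> \<le> A * (e / (A + 1))" using assms(1) that by (intro assms(2)) simp
    also have "\<dots> \<le> e" using assms(1) that by (simp add: field_simps)
    finally show ?thesis by simp
  qed
  then show ?thesis using field_le_epsilon[of "\<bar>x\<bar>" 0] by simp
qed

lemma integral_mult_continuous_eq_0:
  fixes f :: "'a::euclidean_space \<Rightarrow> real"
  assumes f: "bounded_compact_support f"
    and orth: "\<And>p. real_polynomial_function p \<Longrightarrow> (\<integral>z. f z * p z \<partial>lborel) = 0"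
    and g: "continuous_on UNIV g" "\<And>z. \<bar>g z\<bar> \<le> D"
  shows "(\<integral>z. f z * g z \<partial>lborel) = 0"
proof -
  obtain C K where fK: "C \<ge> 0" "\<And>z. \<bar>f z\<bar> \<le> C" "compact K" "\<And>z. z \<notin> K \<Longrightarrow> f z = 0"
    using f by (rule bounded_compact_supportE) blast
  have fg: "integrable lborel (\<lambda>z. f z * g z)"
    using g by (intro integrable_bounded_compact_support bounded_compact_support_mult(1)[OF f]
        borel_measurable_continuous_onI)
  show ?thesis
  proof (rule real_eq_0_if_abs_le_epsilon)
    show "C * measure lborel K \<ge> 0" using fK(1) by simp
    fix e :: real assume "e > 0"
    obtain p where p: "real_polynomial_function p" "\<And>z. z \<in> K \<Longrightarrow> \<bar>g z - p z\<bar> < e"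
      using Stone_Weierstrass_real_polynomial_function[OF fK(3) continuous_on_subset[OF g(1)] \<open>e > 0\<close>]
      by blast
    define r where "r z = f z * (g z - p z)" for z
    have r_bound: "\<bar>r z\<bar> \<le> C * (e * indicator K z)" for z
      using fK(2)[of z] fK(4)[of z] p(2)[of z] fK(1)
      by (cases "z \<in> K") (auto simp: r_def abs_mult intro!: mult_mono)
    have "continuous_on UNIV p"
      using p(1) by (simp add: continuous_on_polymonial_function real_polynomial_function_eq)
    then have "r \<in> borel_measurable borel"
      unfolding r_def using bounded_compact_support_measurable[OF f] g(1)
      by (intro borel_measurable_times borel_measurable_diff) (auto intro: borel_measurable_continuous_onI)
    moreover have "\<bar>r z\<bar> \<le> C * e" for z
      using r_bound[of z] fK(1) \<open>e > 0\<close> by (cases "z \<in> K") auto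
    ultimately have "bounded_compact_support r"
      using fK(3,4) by (intro bounded_compact_supportI[where K=K and C="C * e"]) (auto simp: r_def)
    then have r: "integrable lborel r" by (rule integrable_bounded_compact_support)
    have "(\<integral>z. f z * g z \<partial>lborel) = (\<integral>z. f z * g z - r z \<partial>lborel) + integral\<^sup>L lborel r"
      using fg r by simp
    also have "(\<integral>z. f z * g z - r z \<partial>lborel) = 0"
      using orth[OF p(1)] by (simp add: r_def algebra_simps)
    finally have "\<bar>\<integral>z. f z * g z \<partial>lborel\<bar> = \<bar>integral\<^sup>L lborel r\<bar>" by simp
    also have "\<dots> \<le> (\<integral>z. C * (e * indicator K z) \<partial>lborel)"
      using r r_bound fK(3) emeasure_compact_finite[OF fK(3)]
      by (intro integral_abs_bound_integral)
        (auto intro!: integrable_mult_right integrable_real_indicator borel_compact)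
    also have "\<dots> = C * measure lborel K * e"
      by (simp add: algebra_simps)
    finally show "\<bar>\<integral>z. f z * g z \<partial>lborel\<bar> \<le> C * measure lborel K * e" .
  qed
qed

definition ramp :: "nat \<Rightarrow> real \<Rightarrow> real" where
  "ramp n d = min 1 (max 0 (real n * d + 1))"

lemma abs_ramp_le: "\<bar>ramp n d\<bar> \<le> 1"
  unfolding ramp_def by auto

lemma continuous_on_ramp: "continuous_on UNIV (ramp n)"
  unfolding ramp_def by (intro continuous_intros)

lemma ramp_tendsto: "(\<lambda>n. ramp n d) \<longlonglongrightarrow> (if d \<ge> 0 then 1 else 0)"
proof (cases "d \<ge> 0")
  case True
  then have "ramp n d = 1" for n by (simp add: ramp_def)
  with True show ?thesis by simp
next
  case False
  obtain N :: nat where N: "real N > 1 / (- d)" using reals_Archimedean2 by blast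
  have "ramp n d = 0" if "n \<ge> N" for n
  proof -
    have "real n > 1 / (- d)" using N that by (meson of_nat_le_iff order.strict_trans2)
    then have "real n * d + 1 < 0" using False by (simp add: field_simps)
    then show ?thesis by (simp add: ramp_def)
  qed
  then have "eventually (\<lambda>n. ramp n d = 0) sequentially"
    by (rule eventually_sequentiallyI)
  with False show ?thesis by (simp add: tendsto_eventually)
qed

lemma integral_indicator_cbox_mult_eq_0:
  fixes f :: "real \<times> real \<Rightarrow> real"
  assumes f: "bounded_compact_support f"
    and orth: "\<And>p. real_polynomial_function p \<Longrightarrow> (\<integral>z. f z * p z \<partial>lborel) = 0"
  shows "(\<integral>z. indicator (cbox a b) z * f z \<partial>lborel) = 0"
proof -
  define g where "g n z = ramp n (fst z - fst a) * ramp n (fst b - fst z)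
      * ramp n (snd z - snd a) * ramp n (snd b - snd z)" for n z
  have g_cont: "continuous_on UNIV (g n)" for n
    unfolding g_def by (intro continuous_intros continuous_on_compose2[OF continuous_on_ramp]) auto
  have g_bound: "\<bar>g n z\<bar> \<le> 1" for n z
    unfolding g_def abs_mult by (intro mult_le_one abs_ramp_le) auto
  have "(\<lambda>n. g n z) \<longlonglongrightarrow> indicator (cbox a b) z" for z
  proof -
    have "indicator (cbox a b) z = (if fst z - fst a \<ge> 0 then 1 else 0) * (if fst b - fst z \<ge> 0 then 1 else 0)
        * (if snd z - snd a \<ge> 0 then 1 else 0) * (if snd b - snd z \<ge> 0 then 1 else (0 :: real))"
      by (cases a, cases b, cases z) (auto simp: indicator_def)
    then show ?thesis unfolding g_def by (simp only: tendsto_mult ramp_tendsto)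
  qed
  then have "(\<lambda>n. \<integral>z. f z * g n z \<partial>lborel) \<longlonglongrightarrow> (\<integral>z. f z * indicator (cbox a b) z \<partial>lborel)"
  proof (intro integral_dominated_convergence[where w="\<lambda>z. \<bar>f z\<bar>"] AE_I2 tendsto_mult_left)
    show "(\<lambda>z. f z * g n z) \<in> borel_measurable lborel" for n
      using bounded_compact_support_measurable[OF f] borel_measurable_continuous_onI[OF g_cont[of n]]
      by (simp add: borel_measurable_times)
    show "norm (f z * g n z) \<le> \<bar>f z\<bar>" for n z
      using g_bound[of n z] by (simp add: abs_mult mult_left_le)
  qed (use bounded_compact_support_measurable[OF f] integrable_bounded_compact_support[OF f] in auto)
  moreover have "(\<integral>z. f z * g n z \<partial>lborel) = 0" for n
    by (rule integral_mult_continuous_eq_0[OF f orth g_cont g_bound])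
  ultimately show ?thesis by (simp add: LIMSEQ_const_iff mult.commute)
qed

theorem AE_eq_0_if_orthogonal_polynomials:
  fixes f :: "real \<times> real \<Rightarrow> real"
  assumes f: "bounded_compact_support f"
    and orth: "\<And>p. real_polynomial_function p \<Longrightarrow> (\<integral>z. f z * p z \<partial>lborel) = 0"
  shows "AE z in lborel. f z = 0"
proof -
  have si: "set_integrable lborel (cbox a b) f" for a b
    unfolding set_integrable_def using integrable_bounded_compact_support[OF f]
    by (intro integrable_mult_indicator) auto
  have box_0: "integral (cbox a b) f = 0" for a b
    using set_borel_integral_eq_integral(2)[OF si] integral_indicator_cbox_mult_eq_0[OF f orth]
    by (simp add: set_lebesgue_integral_def)
  obtain N where N: "negligible N"
    "\<And>x e. \<lbrakk>x \<notin> N; 0 < e\<rbrakk> \<Longrightarrow> \<exists>d>0. \<forall>h. 0 < h \<and> h < d \<longrightarrow>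
        norm (integral (cbox x (x + h *\<^sub>R One)) f /\<^sub>R h ^ DIM(real \<times> real) - f x) < e"
    using integrable_ccontinuous_explicit set_borel_integral_eq_integral(1)[OF si] by blast
  have "f x = 0" if "x \<notin> N" for x
  proof -
    have "\<bar>f x\<bar> \<le> 0 + e" if "e > 0" for e
    proof -
      obtain d where "d > 0" and d: "\<forall>h. 0 < h \<and> h < d \<longrightarrow>
          norm (integral (cbox x (x + h *\<^sub>R One)) f /\<^sub>R h ^ DIM(real \<times> real) - f x) < e"
        using N(2)[OF \<open>x \<notin> N\<close> \<open>e > 0\<close>] by blast
      with d[rule_format, of "d/2"] show ?thesis by (simp add: box_0)
    qed
    then show ?thesis using field_le_epsilon[of "\<bar>f x\<bar>" 0] by simp
  qed
  moreover have "AE x in lebesgue. x \<notin> N"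
    using N(1) by (intro AE_not_in) (simp add: negligible_iff_null_sets)
  ultimately have "AE x in lebesgue. f x = 0" by (auto elim: AE_mp)
  then show ?thesis by (simp add: AE_completion_iff)
qed

section \<open>Limits of integrals along characteristic lines\<close>

lemma lebesgue_differentiation_real:
  fixes f :: "real \<Rightarrow> real"
  assumes "f \<in> borel_measurable borel" "\<And>x. \<bar>f x\<bar> \<le> C"
  obtains N where "negligible N"
    "\<And>x. x \<notin> N \<Longrightarrow> ((\<lambda>h. (\<integral>r. indicator {0..h} r * f (x + r) \<partial>lborel) / h) \<longlongrightarrow> f x) (at_right 0)"
proof -
  have "bounded_compact_support (\<lambda>x. indicator {a..b} x * f x)" for a b
  proof (rule bounded_compact_supportI[where K="{a..b}" and C=C])
    show "(\<lambda>x. indicator {a..b} x * f x) \<in> borel_measurable borel" using assms(1) by measurable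
    show "\<bar>indicator {a..b} x * f x\<bar> \<le> C" for x using assms(2)[of x] assms(2)[of a]
      by (auto simp: indicator_def)
  qed auto
  then have si: "set_integrable lborel {a..b} f" for a b
    unfolding set_integrable_def by (simp add: integrable_bounded_compact_support)
  obtain N where N: "negligible N"
    "\<And>x e. \<lbrakk>x \<notin> N; 0 < e\<rbrakk> \<Longrightarrow> \<exists>d>0. \<forall>h. 0 < h \<and> h < d \<longrightarrow>
        norm (integral (cbox x (x + h *\<^sub>R One)) f /\<^sub>R h ^ DIM(real) - f x) < e"
    using integrable_ccontinuous_explicit set_borel_integral_eq_integral(1)[OF si] by (metis box_real(2))
  have box: "integral (cbox x (x + h *\<^sub>R One)) f /\<^sub>R h ^ DIM(real)
      = (\<integral>r. indicator {0..h} r * f (x + r) \<partial>lborel) / h" for x h :: real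
  proof -
    have "integral (cbox x (x + h *\<^sub>R One)) f = (\<integral>\<rho>. indicator {x..x+h} \<rho> * f \<rho> \<partial>lborel)"
      using set_borel_integral_eq_integral(2)[OF si] by (simp add: set_lebesgue_integral_def)
    also have "\<dots> = (\<integral>r. indicator {x..x+h} (x + r) * f (x + r) \<partial>lborel)"
      using lborel_integral_real_affine[of 1 "\<lambda>\<rho>. indicator {x..x+h} \<rho> * f \<rho>" x] by simp
    also have "\<dots> = (\<integral>r. indicator {0..h} r * f (x + r) \<partial>lborel)"
      by (intro Bochner_Integration.integral_cong) (auto simp: indicator_def)
    finally show ?thesis by (simp add: divide_inverse_commute)
  qed
  show ?thesis
  proof (rule that[OF N(1)])
    fix x assume "x \<notin> N"
    show "((\<lambda>h. (\<integral>r. indicator {0..h} r * f (x + r) \<partial>lborel) / h) \<longlongrightarrow> f x) (at_right 0)"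
      unfolding tendsto_iff eventually_at_right_field dist_real_def
    proof (intro allI impI)
      fix e :: real assume "e > 0"
      with N(2)[OF \<open>x \<notin> N\<close>] show "\<exists>b>0. \<forall>h>0. h < b \<longrightarrow>
          \<bar>(\<integral>r. indicator {0..h} r * f (x + r) \<partial>lborel) / h - f x\<bar> < e"
        unfolding box real_norm_def by blast
    qed
  qed
qed

lemma AE_uminus_not_in_negligible:
  assumes "negligible (N :: real set)"
  shows "AE t in lborel. - t \<notin> N"
proof -
  have "negligible (uminus ` N)"
    by (rule negligible_differentiable_image_negligible[OF _ assms]) (auto intro!: derivative_intros)
  then have "AE t in lebesgue. t \<notin> uminus ` N"
    by (intro AE_not_in) (simp add: negligible_iff_null_sets)
  then have "AE t in lebesgue. - t \<notin> N"
    by (rule AE_mp) (rule AE_I2, metis minus_minus rev_image_eqI)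
  then show ?thesis by (simp add: AE_completion_iff)
qed

lemma borel_measurable_integral_along_lines:
  fixes g :: "real \<times> real \<Rightarrow> real"
  assumes "g \<in> borel_measurable borel"
  shows "(\<lambda>y. \<integral>t. g (t, y + lam * t) \<partial>lborel) \<in> borel_measurable lborel"
proof -
  have "(\<lambda>p::real \<times> real. g (snd p, fst p + lam * snd p)) \<in> borel_measurable borel"
    by (intro borel_measurable_compose_continuous[OF assms] continuous_intros)
  then have "(\<lambda>(y, t). g (t, y + lam * t)) \<in> borel_measurable (lborel \<Otimes>\<^sub>M lborel)"
    by (simp add: lborel_prod case_prod_beta)
  then show ?thesis by (rule lborel.borel_measurable_lebesgue_integral)
qed

lemma compact_coordinates_bounded:
  fixes K :: "(real \<times> real) set"
  assumes "compact K"
  obtains R where "R \<ge> 0" "\<And>z. z \<in> K \<Longrightarrow> \<bar>fst z\<bar> \<le> R \<and> \<bar>snd z\<bar> \<le> R"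
proof -
  obtain R where "\<And>z. z \<in> K \<Longrightarrow> norm z \<le> R"
    using compact_imp_bounded[OF assms] unfolding bounded_iff by blast
  then have "\<bar>fst z\<bar> \<le> max R 0 \<and> \<bar>snd z\<bar> \<le> max R 0" if "z \<in> K" for z
    using norm_fst_le[of "fst z" "snd z"] norm_snd_le[of "snd z" "fst z"] that
    by (cases z) (fastforce simp: le_max_iff_disj)
  then show ?thesis using that[of "max R 0"] by simp
qed

lemma integral_along_line_bound:
  fixes G :: "real \<times> real \<Rightarrow> real"
  assumes G: "G \<in> borel_measurable borel" "\<And>z. \<bar>G z\<bar> \<le> C" "\<And>z. z \<notin> K \<Longrightarrow> G z = 0"
    and R: "R \<ge> 0" "\<And>z. z \<in> K \<Longrightarrow> \<bar>fst z\<bar> \<le> R \<and> \<bar>snd z\<bar> \<le> R"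
  shows "\<bar>G (t, y + lam * t)\<bar> \<le> C * indicator {-R..R} t"
    and "\<bar>\<integral>t. G (t, y + lam * t) \<partial>lborel\<bar> \<le> C * (2 * R) * indicator {-(R + \<bar>lam\<bar> * R)..R + \<bar>lam\<bar> * R} y"
proof -
  have C: "C \<ge> 0" using G(2)[of 0] by linarith
  have outside: "(t, y + lam * t) \<notin> K" if "\<bar>t\<bar> > R \<or> \<bar>y\<bar> > R + \<bar>lam\<bar> * R" for t y
  proof
    assume "(t, y + lam * t) \<in> K"
    then have "\<bar>t\<bar> \<le> R" "\<bar>y + lam * t\<bar> \<le> R" using R(2) by auto
    moreover from this(1) have "\<bar>lam * t\<bar> \<le> \<bar>lam\<bar> * R" by (simp add: abs_mult mult_left_mono)
    ultimately show False using that by linarith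
  qed
  have on_line: "\<bar>G (t, y + lam * t)\<bar> \<le> C * indicator {-R..R} t" for t y
    using G(2)[of "(t, y + lam * t)"] G(3)[OF outside, of t y] by (cases "\<bar>t\<bar> \<le> R") (auto simp: indicator_def)
  then show "\<bar>G (t, y + lam * t)\<bar> \<le> C * indicator {-R..R} t" .
  show "\<bar>\<integral>t. G (t, y + lam * t) \<partial>lborel\<bar> \<le> C * (2 * R) * indicator {-(R + \<bar>lam\<bar> * R)..R + \<bar>lam\<bar> * R} y"
  proof (cases "\<bar>y\<bar> \<le> R + \<bar>lam\<bar> * R")
    case True
    have "(\<lambda>t. G (t, y + lam * t)) \<in> borel_measurable lborel"
      using borel_measurable_compose_continuous[OF G(1), of "\<lambda>t. (t, y + lam * t)"]
      by (simp add: continuous_intros)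
    then have "integrable lborel (\<lambda>t. G (t, y + lam * t))"
      using on_line C
      by (intro Bochner_Integration.integrable_bound[OF integrable_indicator_Icc[of C "-R" R]] AE_I2)
        (simp_all add: abs_mult)
    then have "\<bar>\<integral>t. G (t, y + lam * t) \<partial>lborel\<bar> \<le> (\<integral>t. C * indicator {-R..R} t \<partial>lborel)"
      using on_line by (intro integral_abs_bound_integral integrable_indicator_Icc)
    also have "\<dots> = C * (2 * R)" using R(1) by simp
    finally show ?thesis using True by (simp add: indicator_def abs_le_iff)
  next
    case False
    then have "G (t, y + lam * t) = 0" for t using G(3)[OF outside] by auto
    moreover have "y \<notin> {-(R + \<bar>lam\<bar> * R)..R + \<bar>lam\<bar> * R}" using False by auto
    ultimately show ?thesis by simp
  qed
qed

text \<open>Dominated convergence, applied first on each characteristic line \<open>x = y + \<lambda> t\<close> and then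
  in \<open>y\<close>, so that pointwise convergence is only needed almost everywhere on every line.\<close>

lemma integral_tendsto_along_lines:
  fixes g :: "nat \<Rightarrow> real \<times> real \<Rightarrow> real" and g0 :: "real \<times> real \<Rightarrow> real"
  assumes meas: "\<And>n. g n \<in> borel_measurable borel" "g0 \<in> borel_measurable borel"
    and bound: "\<And>n z. \<bar>g n z\<bar> \<le> C" "\<And>z. \<bar>g0 z\<bar> \<le> C"
    and K: "compact K" and vanish: "\<And>n z. z \<notin> K \<Longrightarrow> g n z = 0" "\<And>z. z \<notin> K \<Longrightarrow> g0 z = 0"
    and lim: "\<And>y. AE t in lborel. (\<lambda>n. g n (t, y + lam * t)) \<longlonglongrightarrow> g0 (t, y + lam * t)"
  shows "(\<lambda>n. integral\<^sup>L lborel (g n)) \<longlonglongrightarrow> integral\<^sup>L lborel g0"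
proof -
  obtain R where R: "R \<ge> 0" "\<And>z. z \<in> K \<Longrightarrow> \<bar>fst z\<bar> \<le> R \<and> \<bar>snd z\<bar> \<le> R"
    using compact_coordinates_bounded[OF K] by blast
  note line_bound = integral_along_line_bound[OF meas(1) bound(1) vanish(1) R]
  have line_measurable: "(\<lambda>t. G (t, y + lam * t)) \<in> borel_measurable lborel"
    if "G \<in> borel_measurable borel" for G :: "real \<times> real \<Rightarrow> real" and y
    using borel_measurable_compose_continuous[OF that, of "\<lambda>t. (t, y + lam * t)"]
    by (simp add: continuous_intros)
  have inner: "(\<lambda>n. \<integral>t. g n (t, y + lam * t) \<partial>lborel) \<longlonglongrightarrow> (\<integral>t. g0 (t, y + lam * t) \<partial>lborel)"
    for y
    using line_bound(1) line_measurable meas lim integrable_indicator_Icc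
    by (intro integral_dominated_convergence[where w="\<lambda>t. C * indicator {-R..R} t"]) auto
  have "(\<lambda>n. \<integral>y. \<integral>t. g n (t, y + lam * t) \<partial>lborel \<partial>lborel)
      \<longlonglongrightarrow> (\<integral>y. \<integral>t. g0 (t, y + lam * t) \<partial>lborel \<partial>lborel)"
    using line_bound(2) borel_measurable_integral_along_lines meas inner integrable_indicator_Icc
    by (intro integral_dominated_convergence[where
          w="\<lambda>y. C * (2 * R) * indicator {-(R + \<bar>lam\<bar> * R)..R + \<bar>lam\<bar> * R} y"]) auto
  moreover have "integral\<^sup>L lborel (g n) = (\<integral>y. \<integral>t. g n (t, y + lam * t) \<partial>lborel \<partial>lborel)" for n
    by (rule lborel_integral_shear[OF bounded_compact_supportI[OF meas(1) K vanish(1) bound(1)]])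
  moreover have "integral\<^sup>L lborel g0 = (\<integral>y. \<integral>t. g0 (t, y + lam * t) \<partial>lborel \<partial>lborel)"
    by (rule lborel_integral_shear[OF bounded_compact_supportI[OF meas(2) K vanish(2) bound(2)]])
  ultimately show ?thesis by simp
qed

lemma smooth2_bounded_compact_support:
  assumes "smooth2 \<phi>" "compact K" "\<And>z. z \<notin> K \<Longrightarrow> \<phi> z = 0"
  shows "bounded_compact_support \<phi>"
  using assms by (intro bounded_compact_support_continuous smooth2_imp_continuous)

lemma partials_bounded_compact_support:
  assumes "smooth2 \<phi>" "partials \<phi> \<phi>t \<phi>x" "compact K" "\<And>z. z \<notin> K \<Longrightarrow> \<phi> z = 0"
  shows "bounded_compact_support \<phi>t" "bounded_compact_support \<phi>x"
  using assms smooth2_partials[OF assms(1,2)] partials_vanish_outside[OF assms(2) compact_imp_closed]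
  by (auto intro!: smooth2_bounded_compact_support[where K=K])

lemma partials_bounded:
  assumes "smooth2 \<phi>" "partials \<phi> \<phi>t \<phi>x" "compact K" "\<And>z. z \<notin> K \<Longrightarrow> \<phi> z = 0"
  obtains C where "\<And>z. \<bar>\<phi>t z\<bar> \<le> C" "\<And>z. \<bar>\<phi>x z\<bar> \<le> C"
proof -
  obtain Ct Cx where "\<And>z. \<bar>\<phi>t z\<bar> \<le> Ct" "\<And>z. \<bar>\<phi>x z\<bar> \<le> Cx"
    using bounded_compact_support_bound[OF partials_bounded_compact_support(1)[OF assms]]
      bounded_compact_support_bound[OF partials_bounded_compact_support(2)[OF assms]] by blast
  then have "\<bar>\<phi>t z\<bar> \<le> max Ct Cx" "\<bar>\<phi>x z\<bar> \<le> max Ct Cx" for z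
    by (simp_all add: le_max_iff_disj)
  then show ?thesis by (rule that)
qed

lemma bounded_compact_support_ray_integral:
  assumes "smooth2 \<phi>" "compact K" "\<And>z. z \<notin> K \<Longrightarrow> \<phi> z = 0"
  shows "bounded_compact_support (ray_integral q v \<phi>)"
  using assms ray_integral_vanishes[OF assms(3)]
  by (intro bounded_compact_support_continuous[where K="swept_set K v q"] compact_swept_set
      smooth2_imp_continuous smooth2_ray_integral) auto

lemma bounded_compact_support_segment:
  fixes f g :: "real \<times> real \<Rightarrow> real"
  assumes f: "f \<in> borel_measurable borel" "\<And>z. \<bar>f z\<bar> \<le> B" and g: "bounded_compact_support g"
  shows "bounded_compact_support (\<lambda>(z, r). f z * (indicator {0..q} r * g (z + r *\<^sub>R v)))"
    and "bounded_compact_support (\<lambda>(z, r). indicator {0..q} r * f (z - r *\<^sub>R v) * g z)"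
proof -
  obtain C K where gK: "C \<ge> 0" "\<And>z. \<bar>g z\<bar> \<le> C" "compact K" "\<And>z. z \<notin> K \<Longrightarrow> g z = 0"
    using g by (rule bounded_compact_supportE) blast
  have B: "B \<ge> 0" using f(2)[of 0] by linarith
  have indicator_measurable: "(\<lambda>p::(real \<times> real) \<times> real. indicator {0..q} (snd p) :: real) \<in> borel_measurable borel"
    by (rule borel_measurable_compose_continuous[where g="indicator {0..q}"]) (auto intro: continuous_intros)
  have g_measurable: "g \<in> borel_measurable borel" by (rule bounded_compact_support_measurable[OF g])
  show "bounded_compact_support (\<lambda>(z, r). f z * (indicator {0..q} r * g (z + r *\<^sub>R v)))"
  proof (rule bounded_compact_supportI[where K="swept_set K v q \<times> {0..q}" and C="B * C"])
    show "(\<lambda>(z, r). f z * (indicator {0..q} r * g (z + r *\<^sub>R v))) \<in> borel_measurable borel"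
      unfolding case_prod_beta
      by (intro borel_measurable_times indicator_measurable borel_measurable_compose_continuous[OF f(1)]
          borel_measurable_compose_continuous[OF g_measurable] continuous_intros)
    show "compact (swept_set K v q \<times> {0..q})"
      using compact_swept_set[OF gK(3)] by (intro compact_Times) auto
    show "(case p of (z, r) \<Rightarrow> f z * (indicator {0..q} r * g (z + r *\<^sub>R v))) = 0"
      if "p \<notin> swept_set K v q \<times> {0..q}" for p
    proof (cases "snd p \<in> {0..q}")
      case True
      then have "fst p + snd p *\<^sub>R v \<notin> K"
        using that swept_setI[of "fst p" "snd p" v K q] by (cases p) auto
      then show ?thesis using gK(4) by (simp add: case_prod_beta)
    qed (simp add: case_prod_beta)
    show "\<bar>case p of (z, r) \<Rightarrow> f z * (indicator {0..q} r * g (z + r *\<^sub>R v))\<bar> \<le> B * C" for p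
      using f(2)[of "fst p"] gK(2)[of "fst p + snd p *\<^sub>R v"] B gK(1)
      by (auto simp: case_prod_beta indicator_def abs_mult intro: mult_mono)
  qed
  show "bounded_compact_support (\<lambda>(z, r). indicator {0..q} r * f (z - r *\<^sub>R v) * g z)"
  proof (rule bounded_compact_supportI[where K="K \<times> {0..q}" and C="B * C"])
    show "(\<lambda>(z, r). indicator {0..q} r * f (z - r *\<^sub>R v) * g z) \<in> borel_measurable borel"
      unfolding case_prod_beta
      by (intro borel_measurable_times indicator_measurable borel_measurable_compose_continuous[OF f(1)]
          borel_measurable_compose_continuous[OF g_measurable] continuous_intros)
    show "compact (K \<times> {0..q})" using gK(3) by (intro compact_Times) auto
    show "(case p of (z, r) \<Rightarrow> indicator {0..q} r * f (z - r *\<^sub>R v) * g z) = 0"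
      if "p \<notin> K \<times> {0..q}" for p
      using that gK(4) by (cases p) (auto simp: indicator_def)
    show "\<bar>case p of (z, r) \<Rightarrow> indicator {0..q} r * f (z - r *\<^sub>R v) * g z\<bar> \<le> B * C" for p
      using f(2)[of "fst p - snd p *\<^sub>R v"] gK(2)[of "fst p"] B gK(1)
      by (auto simp: case_prod_beta indicator_def abs_mult intro: mult_mono)
  qed
qed

lemma compact_support_in_pos_time:
  assumes "compact_support_in \<phi> ({0<..} \<times> UNIV)"
  obtains K \<delta> where "compact K" "\<And>z. z \<notin> K \<Longrightarrow> \<phi> z = 0" "\<delta> > 0" "\<delta> \<le> 1"
    "\<And>z. z \<in> K \<Longrightarrow> fst z > \<delta>"
proof -
  obtain K where K: "compact K" "K \<subseteq> {0<..} \<times> UNIV" "\<And>z. z \<notin> K \<Longrightarrow> \<phi> z = 0"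
    using assms unfolding compact_support_in_def by blast
  show ?thesis
  proof (cases "K = {}")
    case True
    then show ?thesis using that[OF K(1,3), of 1] by auto
  next
    case False
    obtain z0 where z0: "z0 \<in> K" "\<And>z. z \<in> K \<Longrightarrow> fst z0 \<le> fst z"
      using continuous_attains_inf[OF K(1) False continuous_on_fst[OF continuous_on_id]] by auto
    then have "fst z0 > 0" using K(2) by auto
    then show ?thesis
      using z0 by (intro that[OF K(1,3), of "min 1 (fst z0 / 2)"]) force+
  qed
qed

lemma abs_shift_difference_le:
  assumes p: "partials \<phi> \<phi>t \<phi>x" and c: "continuous_on UNIV \<phi>t" "continuous_on UNIV \<phi>x"
    and b: "\<And>z. \<bar>\<phi>t z\<bar> \<le> C" "\<And>z. \<bar>\<phi>x z\<bar> \<le> C" and r: "r \<ge> 0"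
  shows "\<bar>\<phi> (z + r *\<^sub>R v) - \<phi> z\<bar> \<le> C * (\<bar>fst v\<bar> + \<bar>snd v\<bar>) * r"
proof -
  have "\<bar>\<phi> (z + r *\<^sub>R v) - \<phi> z\<bar> \<le> \<bar>fst v\<bar> * \<bar>ray_integral r v \<phi>t z\<bar> + \<bar>snd v\<bar> * \<bar>ray_integral r v \<phi>x z\<bar>"
    unfolding ray_integral_partials[OF p c r, symmetric] abs_mult[symmetric] by (rule abs_triangle_ineq)
  also have "\<dots> \<le> \<bar>fst v\<bar> * (C * r) + \<bar>snd v\<bar> * (C * r)"
    using abs_ray_integral_le[OF c(1) b(1) r] abs_ray_integral_le[OF c(2) b(2) r]
    by (intro add_mono mult_left_mono) auto
  finally show ?thesis by (simp add: algebra_simps)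
qed

lemma shift_difference_quotient_tendsto:
  assumes p: "partials \<phi> \<phi>t \<phi>x" and q: "\<And>n. q n > 0" "q \<longlonglongrightarrow> 0"
  shows "(\<lambda>n. (\<phi> (z + q n *\<^sub>R v) - \<phi> z) / q n) \<longlonglongrightarrow> fst v * \<phi>t z + snd v * \<phi>x z"
proof -
  have "((\<lambda>r. z + r *\<^sub>R v) has_derivative (\<lambda>h. h *\<^sub>R v)) (at 0)"
    by (auto intro!: derivative_eq_intros)
  moreover have "(\<phi> has_derivative (\<lambda>(s, y). s * \<phi>t z + y * \<phi>x z)) (at (z + 0 *\<^sub>R v))"
    using p[unfolded partials_def, rule_format, of z] by simp
  ultimately have "((\<lambda>r. \<phi> (z + r *\<^sub>R v)) has_derivative
      (\<lambda>h. (\<lambda>(s, y). s * \<phi>t z + y * \<phi>x z) (h *\<^sub>R v))) (at 0)"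
    by (rule has_derivative_compose)
  then have "((\<lambda>r. \<phi> (z + r *\<^sub>R v)) has_field_derivative (fst v * \<phi>t z + snd v * \<phi>x z)) (at 0)"
    unfolding has_field_derivative_def
    by (rule has_derivative_eq_rhs) (auto simp: fun_eq_iff algebra_simps case_prod_beta)
  then have "((\<lambda>r. (\<phi> (z + r *\<^sub>R v) - \<phi> z) / r) \<longlongrightarrow> fst v * \<phi>t z + snd v * \<phi>x z) (at 0)"
    unfolding has_field_derivative_iff by simp
  moreover have "filterlim q (at 0) sequentially"
    by (rule filterlim_atI[OF q(2)]) (use q(1) in \<open>auto intro!: always_eventually simp: less_imp_neq[symmetric]\<close>)
  ultimately show ?thesis by (rule filterlim_compose)
qed

lemma integral_shift_difference_quotient_tendsto:
  assumes \<phi>: "smooth2 \<phi>" "partials \<phi> \<phi>t \<phi>x" "compact K" "\<And>z. z \<notin> K \<Longrightarrow> \<phi> z = 0"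
    and f: "f \<in> borel_measurable borel" "\<And>z. \<bar>f z\<bar> \<le> D"
    and q: "\<And>n. q n > 0" "\<And>n. q n \<le> 1" "q \<longlonglongrightarrow> 0"
  shows "(\<lambda>n. \<integral>z. f z * (\<phi> (z + q n *\<^sub>R v) - \<phi> z) / q n \<partial>lborel)
     \<longlonglongrightarrow> (\<integral>z. f z * (fst v * \<phi>t z + snd v * \<phi>x z) \<partial>lborel)"
proof -
  have c: "continuous_on UNIV \<phi>" "continuous_on UNIV \<phi>t" "continuous_on UNIV \<phi>x"
    using smooth2_partials[OF \<phi>(1,2)] \<phi>(1) smooth2_imp_continuous by auto
  obtain C where C: "\<And>z. \<bar>\<phi>t z\<bar> \<le> C" "\<And>z. \<bar>\<phi>x z\<bar> \<le> C"
    using partials_bounded[OF \<phi>] by blast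
  have vanish: "\<phi> (z + r *\<^sub>R v) - \<phi> z = 0" if "z \<notin> swept_set K v 1" "0 \<le> r" "r \<le> 1" for z r
  proof -
    have "z \<notin> K" "z + r *\<^sub>R v \<notin> K"
      using that swept_setI[of z 0 v K 1] swept_setI[of z r v K 1] by auto
    then show ?thesis using \<phi>(4) by simp
  qed
  define E where "E = D * (C * (\<bar>fst v\<bar> + \<bar>snd v\<bar>))"
  have shift_measurable: "(\<lambda>z. \<phi> (z + q n *\<^sub>R v)) \<in> borel_measurable borel" for n
    by (intro borel_measurable_compose_continuous[OF borel_measurable_continuous_onI[OF c(1)]]
        continuous_intros)
  show ?thesis
  proof (rule integral_dominated_convergence[where w="\<lambda>z. E * indicator (swept_set K v 1) z"])
    show "AE z in lborel. (\<lambda>n. f z * (\<phi> (z + q n *\<^sub>R v) - \<phi> z) / q n)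
        \<longlonglongrightarrow> f z * (fst v * \<phi>t z + snd v * \<phi>x z)"
      using shift_difference_quotient_tendsto[OF \<phi>(2) q(1,3)]
      by (intro AE_I2) (simp add: tendsto_mult_left times_divide_eq_right[symmetric] del: times_divide_eq_right)
    show "AE z in lborel. norm (f z * (\<phi> (z + q n *\<^sub>R v) - \<phi> z) / q n) \<le> E * indicator (swept_set K v 1) z" for n
    proof (rule AE_I2)
      fix z
      have "\<bar>f z\<bar> * \<bar>\<phi> (z + q n *\<^sub>R v) - \<phi> z\<bar> \<le> D * (C * (\<bar>fst v\<bar> + \<bar>snd v\<bar>) * q n)"
        using f(2)[of z] abs_shift_difference_le[OF \<phi>(2) c(2,3) C, of "q n" z v] q(1)[of n]
        by (intro mult_mono) auto
      then have "norm (f z * (\<phi> (z + q n *\<^sub>R v) - \<phi> z) / q n) \<le> E"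
        using q(1)[of n] by (simp add: E_def abs_mult divide_le_eq mult.assoc)
      then show "norm (f z * (\<phi> (z + q n *\<^sub>R v) - \<phi> z) / q n) \<le> E * indicator (swept_set K v 1) z"
        using vanish[of z "q n"] q(1,2)[of n] by (cases "z \<in> swept_set K v 1") auto
    qed
    have "compact (swept_set K v 1)" by (rule compact_swept_set[OF \<phi>(3)])
    then show "integrable lborel (\<lambda>z. E * indicator (swept_set K v 1) z)"
      by (intro integrable_mult_right integrable_real_indicator emeasure_compact_finite)
        (simp_all add: borel_compact)
    show "(\<lambda>z. f z * (fst v * \<phi>t z + snd v * \<phi>x z)) \<in> borel_measurable lborel"
      using f(1) borel_measurable_continuous_onI[OF c(2)] borel_measurable_continuous_onI[OF c(3)]
      by measurable
    show "(\<lambda>z. f z * (\<phi> (z + q n *\<^sub>R v) - \<phi> z) / q n) \<in> borel_measurable lborel" for n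
      using f(1) shift_measurable[of n] borel_measurable_continuous_onI[OF c(1)] by measurable
  qed
qed

section \<open>Kruzhkov's inequality for a transport equation with bounded source\<close>

text \<open>Convexity of \<open>\<bar>\<cdot> - k\<bar>\<close>: \<open>sgn (b - k)\<close> is a subgradient at \<open>b\<close>.\<close>

lemma abs_increment_ge:
  fixes p a b k J :: real
  assumes "p \<ge> 0" "p * (a - b + J) = 0"
  shows "- (p * sgn (b - k) * J) \<le> p * \<bar>a - k\<bar> - p * \<bar>b - k\<bar>"
proof (cases "p = 0")
  case False
  with assms(2) have "J = b - a" by simp
  moreover have "sgn (b - k) * (a - b) \<le> \<bar>a - k\<bar> - \<bar>b - k\<bar>"
    by (cases "b - k" rule: linorder_cases) (auto simp: sgn_if abs_if)
  ultimately have "- (sgn (b - k) * J) \<le> \<bar>a - k\<bar> - \<bar>b - k\<bar>" by (simp add: right_diff_distrib)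
  from mult_left_mono[OF this assms(1)] show ?thesis by (simp add: algebra_simps)
qed simp

locale transport_weak_solution =
  fixes w S :: "real \<times> real \<Rightarrow> real" and lam B :: real
  assumes w_measurable: "w \<in> borel_measurable borel" and S_measurable: "S \<in> borel_measurable borel"
    and w_bounded: "\<And>z. \<bar>w z\<bar> \<le> B" and S_bounded: "\<And>z. \<bar>S z\<bar> \<le> B"
    and weak_solution: "\<And>\<psi> \<psi>t \<psi>x. smooth2 \<psi> \<Longrightarrow> compact_support_in \<psi> ({0<..} \<times> UNIV) \<Longrightarrow>
      partials \<psi> \<psi>t \<psi>x \<Longrightarrow> (\<integral>z. w z * \<psi>t z + lam * w z * \<psi>x z + S z * \<psi> z \<partial>lborel) = 0"
begin

definition source_integral :: "real \<Rightarrow> real \<times> real \<Rightarrow> real" where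
  "source_integral q z = (\<integral>r. indicator {0..q} r * S (z - r *\<^sub>R (1, lam)) \<partial>lborel)"

lemma bound_nonneg: "B \<ge> 0"
  using w_bounded[of 0] by linarith

lemma borel_measurable_abs_w_minus: "(\<lambda>z. \<bar>w z - k\<bar>) \<in> borel_measurable borel"
  using w_measurable by measurable

lemma abs_abs_w_minus_le: "\<bar>\<bar>w z - k\<bar>\<bar> \<le> B + \<bar>k\<bar>"
  using w_bounded[of z] by linarith

lemma borel_measurable_source_integral: "source_integral q \<in> borel_measurable borel"
proof -
  have "(\<lambda>p::(real \<times> real) \<times> real. indicator {0..q} (snd p) * S (fst p - snd p *\<^sub>R (1, lam)))
      \<in> borel_measurable borel"
  proof (intro borel_measurable_times)
    show "(\<lambda>p::(real \<times> real) \<times> real. indicator {0..q} (snd p) :: real) \<in> borel_measurable borel"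
      by (rule borel_measurable_compose_continuous[where g="indicator {0..q}"]) (auto intro: continuous_intros)
    show "(\<lambda>p::(real \<times> real) \<times> real. S (fst p - snd p *\<^sub>R (1, lam))) \<in> borel_measurable borel"
      by (rule borel_measurable_compose_continuous[OF S_measurable]) (auto intro!: continuous_intros)
  qed
  then have "(\<lambda>(z, r). indicator {0..q} r * S (z - r *\<^sub>R (1, lam))) \<in> borel_measurable (lborel \<Otimes>\<^sub>M lborel)"
    by (simp add: lborel_prod case_prod_beta)
  then show ?thesis
    unfolding source_integral_def[abs_def] by (simp add: lborel.borel_measurable_lebesgue_integral)
qed

lemma abs_source_integral_le:
  assumes "q \<ge> 0"
  shows "\<bar>source_integral q z\<bar> \<le> B * q"
proof -
  have bound: "\<bar>indicator {0..q} r * S (z - r *\<^sub>R (1, lam))\<bar> \<le> B * indicator {0..q} r" for r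
    using S_bounded[of "z - r *\<^sub>R (1, lam)"] by (auto simp: indicator_def)
  have "(\<lambda>r. indicator {0..q} r * S (z - r *\<^sub>R (1, lam))) \<in> borel_measurable lborel"
    by (intro borel_measurable_times)
      (auto intro!: borel_measurable_compose_continuous[OF S_measurable] continuous_intros)
  then have "integrable lborel (\<lambda>r. indicator {0..q} r * S (z - r *\<^sub>R (1, lam)))"
    using bound bound_nonneg
    by (intro Bochner_Integration.integrable_bound[OF integrable_indicator_Icc[of B 0 q]]) auto
  then have "\<bar>source_integral q z\<bar> \<le> (\<integral>r. B * indicator {0..q} r \<partial>lborel)"
    unfolding source_integral_def using bound
    by (intro integral_abs_bound_integral integrable_indicator_Icc)
  also have "\<dots> = B * q" using assms by simp
  finally show ?thesis .
qed

lemma integral_S_mult_ray_integral: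
  assumes \<psi>: "continuous_on UNIV \<psi>" "compact K" "\<And>z. z \<notin> K \<Longrightarrow> \<psi> z = 0" and q: "q \<ge> 0"
  shows "(\<integral>z. S z * ray_integral q (1, lam) \<psi> z \<partial>lborel) = (\<integral>z. \<psi> z * source_integral q z \<partial>lborel)"
proof -
  let ?v = "(1::real, lam)"
  have \<psi>_bcs: "bounded_compact_support \<psi>" by (rule bounded_compact_support_continuous[OF \<psi>])
  define F1 where "F1 z r = S z * (indicator {0..q} r * \<psi> (z + r *\<^sub>R ?v))" for z r
  define F2 where "F2 z r = indicator {0..q} r * S (z - r *\<^sub>R ?v) * \<psi> z" for z r
  have int1: "integrable (lborel \<Otimes>\<^sub>M lborel) (case_prod F1)"
    unfolding lborel_prod F1_def
    by (rule integrable_bounded_compact_support[OF bounded_compact_support_segment(1)[OF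
          S_measurable S_bounded \<psi>_bcs]])
  have int2: "integrable (lborel \<Otimes>\<^sub>M lborel) (case_prod F2)"
    unfolding lborel_prod F2_def
    by (rule integrable_bounded_compact_support[OF bounded_compact_support_segment(2)[OF
          S_measurable S_bounded \<psi>_bcs]])
  have "(\<integral>z. S z * ray_integral q ?v \<psi> z \<partial>lborel) = (\<integral>z. \<integral>r. F1 z r \<partial>lborel \<partial>lborel)"
    by (simp add: ray_integral_eq_lebesgue[OF \<psi>(1)] F1_def)
  also have "\<dots> = (\<integral>r. \<integral>z. F1 z r \<partial>lborel \<partial>lborel)"
    by (rule lborel_pair.Fubini_integral[OF int1, symmetric])
  also have "\<dots> = (\<integral>r. \<integral>z. F2 z r \<partial>lborel \<partial>lborel)"
  proof (rule Bochner_Integration.integral_cong[OF refl])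
    fix r
    have "(\<lambda>z. S z * \<psi> (z + r *\<^sub>R ?v)) \<in> borel_measurable borel"
      by (intro borel_measurable_times S_measurable borel_measurable_compose_continuous[OF
          bounded_compact_support_measurable[OF \<psi>_bcs]] continuous_intros)
    from lborel_integral_translate[OF this, of "- (r *\<^sub>R ?v)"]
    have shift: "(\<integral>z. S z * \<psi> (z + r *\<^sub>R ?v) \<partial>lborel) = (\<integral>z. S (z - r *\<^sub>R ?v) * \<psi> z \<partial>lborel)"
      by (simp only: diff_conv_add_uminus[symmetric] diff_add_cancel)
    have "(\<integral>z. F1 z r \<partial>lborel) = indicator {0..q} r * (\<integral>z. S z * \<psi> (z + r *\<^sub>R ?v) \<partial>lborel)"
      unfolding F1_def by (subst mult.left_commute) (rule integral_mult_right_zero)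
    also have "\<dots> = (\<integral>z. F2 z r \<partial>lborel)"
      unfolding shift F2_def mult.assoc by (rule integral_mult_right_zero[symmetric])
    finally show "(\<integral>z. F1 z r \<partial>lborel) = (\<integral>z. F2 z r \<partial>lborel)" .
  qed
  also have "\<dots> = (\<integral>z. \<integral>r. F2 z r \<partial>lborel \<partial>lborel)"
    by (rule lborel_pair.Fubini_integral[OF int2])
  also have "\<dots> = (\<integral>z. \<psi> z * source_integral q z \<partial>lborel)"
    by (simp add: F2_def source_integral_def mult.commute)
  finally show ?thesis .
qed

text \<open>By the fundamental theorem of calculus, the derivative of the test function
  \<open>ray_integral q (1, \<lambda>) \<psi>\<close> along the characteristic direction \<open>(1, \<lambda>)\<close> is the increment
  \<open>\<psi> (z + q (1, \<lambda>)) - \<psi> z\<close>.\<close>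

lemma weak_solution_ray_integral:
  assumes \<psi>: "smooth2 \<psi>" "compact K" "\<And>z. z \<notin> K \<Longrightarrow> \<psi> z = 0"
    and pos: "\<And>z. z \<in> K \<Longrightarrow> fst z > q" and q: "q > 0"
  shows "(\<integral>z. w z * \<psi> (z + q *\<^sub>R (1, lam)) - w z * \<psi> z + S z * ray_integral q (1, lam) \<psi> z \<partial>lborel) = 0"
proof -
  let ?v = "(1::real, lam)"
  obtain \<psi>t \<psi>x where p: "partials \<psi> \<psi>t \<psi>x" using smooth2_partialsE[OF \<psi>(1)] by blast
  have c: "continuous_on UNIV \<psi>t" "continuous_on UNIV \<psi>x"
    using smooth2_partials[OF \<psi>(1) p] smooth2_imp_continuous by auto
  have "swept_set K ?v q \<subseteq> {0<..} \<times> UNIV"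
  proof
    fix x assume "x \<in> swept_set K ?v q"
    then obtain y r where "y \<in> K" "0 \<le> r" "r \<le> q" "x = y - r *\<^sub>R ?v"
      unfolding swept_set_def by auto
    then show "x \<in> {0<..} \<times> UNIV" using pos[of y] by (cases y) auto
  qed
  then have "compact_support_in (ray_integral q ?v \<psi>) ({0<..} \<times> UNIV)"
    unfolding compact_support_in_def
    by (intro exI[of _ "swept_set K ?v q"] conjI compact_swept_set[OF \<psi>(2)] allI impI
        ray_integral_vanishes[OF \<psi>(3)])
  from weak_solution[OF smooth2_ray_integral[OF \<psi>(1)] this partials_ray_integral[OF \<psi>(1) p]]
  have "(\<integral>z. w z * (fst ?v * ray_integral q ?v \<psi>t z + snd ?v * ray_integral q ?v \<psi>x z)
      + S z * ray_integral q ?v \<psi> z \<partial>lborel) = 0"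
    by (simp add: algebra_simps)
  then show ?thesis
    using q by (simp only: ray_integral_partials[OF p c] less_imp_le right_diff_distrib)
qed

lemma integral_mult_characteristic_increment:
  assumes \<psi>: "smooth2 \<psi>" "compact K" "\<And>z. z \<notin> K \<Longrightarrow> \<psi> z = 0"
    and pos: "\<And>z. z \<in> K \<Longrightarrow> fst z > q" and q: "q > 0"
  shows "(\<integral>z. \<psi> z * (w (z - q *\<^sub>R (1, lam)) - w z + source_integral q z) \<partial>lborel) = 0"
proof -
  let ?v = "(1::real, lam)"
  have \<psi>_bcs: "bounded_compact_support \<psi>" by (rule smooth2_bounded_compact_support[OF \<psi>])
  have shifted: "bounded_compact_support (\<lambda>z. w z * \<psi> (z + q *\<^sub>R ?v))"
    by (rule bounded_compact_support_mult(2)[OF bounded_compact_support_translate[OF \<psi>_bcs]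
          w_measurable w_bounded])
  have w\<psi>: "integrable lborel (\<lambda>z. w z * \<psi> z)"
    by (rule integrable_bounded_compact_support[OF bounded_compact_support_mult(2)[OF
          \<psi>_bcs w_measurable w_bounded]])
  have "integrable lborel (\<lambda>z. S z * ray_integral q ?v \<psi> z)"
    by (rule integrable_bounded_compact_support[OF bounded_compact_support_mult(2)[OF
          bounded_compact_support_ray_integral[OF \<psi>] S_measurable S_bounded]])
  with weak_solution_ray_integral[OF \<psi> pos q] integrable_bounded_compact_support[OF shifted] w\<psi>
  have "(\<integral>z. w z * \<psi> (z + q *\<^sub>R ?v) \<partial>lborel) - (\<integral>z. w z * \<psi> z \<partial>lborel)
      + (\<integral>z. S z * ray_integral q ?v \<psi> z \<partial>lborel) = 0"
    by simp
  moreover have "(\<integral>z. w z * \<psi> (z + q *\<^sub>R ?v) \<partial>lborel) = (\<integral>z. w (z - q *\<^sub>R ?v) * \<psi> z \<partial>lborel)"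
    using lborel_integral_translate[OF bounded_compact_support_measurable[OF shifted], of "- (q *\<^sub>R ?v)"]
    by (simp only: diff_conv_add_uminus[symmetric] diff_add_cancel)
  moreover have "(\<integral>z. S z * ray_integral q ?v \<psi> z \<partial>lborel) = (\<integral>z. \<psi> z * source_integral q z \<partial>lborel)"
    using integral_S_mult_ray_integral[OF smooth2_imp_continuous[OF \<psi>(1)] \<psi>(2,3)] q by simp
  moreover have "integrable lborel (\<lambda>z. w (z - q *\<^sub>R ?v) * \<psi> z)"
    by (rule integrable_bounded_compact_support[OF bounded_compact_support_mult(2)[OF \<psi>_bcs
          borel_measurable_compose_continuous[OF w_measurable] w_bounded]]) (intro continuous_intros)
  moreover have "integrable lborel (\<lambda>z. \<psi> z * source_integral q z)"
    using q by (intro integrable_bounded_compact_support bounded_compact_support_mult(1)[OF \<psi>_bcs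
          borel_measurable_source_integral abs_source_integral_le]) simp
  moreover have "(\<integral>z. \<psi> z * (w (z - q *\<^sub>R ?v) - w z + source_integral q z) \<partial>lborel)
      = (\<integral>z. w (z - q *\<^sub>R ?v) * \<psi> z - w z * \<psi> z + \<psi> z * source_integral q z \<partial>lborel)"
    by (simp add: algebra_simps)
  ultimately show ?thesis using w\<psi> by simp
qed

lemma AE_characteristic_increment:
  assumes \<phi>: "smooth2 \<phi>" "compact K" "\<And>z. z \<notin> K \<Longrightarrow> \<phi> z = 0"
    and pos: "\<And>z. z \<in> K \<Longrightarrow> fst z > q" and q: "q > 0"
  shows "AE z in lborel. \<phi> z * (w (z - q *\<^sub>R (1, lam)) - w z + source_integral q z) = 0"
proof (rule AE_eq_0_if_orthogonal_polynomials)
  let ?v = "(1::real, lam)"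
  have measurable: "(\<lambda>z. w (z - q *\<^sub>R ?v) - w z + source_integral q z) \<in> borel_measurable borel"
    by (intro borel_measurable_add borel_measurable_diff w_measurable borel_measurable_source_integral
        borel_measurable_compose_continuous[OF w_measurable] continuous_intros)
  have bounded: "\<bar>w (z - q *\<^sub>R ?v) - w z + source_integral q z\<bar> \<le> 2 * B + B * q" for z
    using w_bounded[of z] w_bounded[of "z - q *\<^sub>R ?v"] abs_source_integral_le[of q z] q by linarith
  show "bounded_compact_support (\<lambda>z. \<phi> z * (w (z - q *\<^sub>R ?v) - w z + source_integral q z))"
    by (rule bounded_compact_support_mult(1)[OF smooth2_bounded_compact_support[OF \<phi>] measurable bounded])
  show "(\<integral>z. \<phi> z * (w (z - q *\<^sub>R ?v) - w z + source_integral q z) * p z \<partial>lborel) = 0"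
    if "real_polynomial_function p" for p
  proof -
    have "smooth2 (\<lambda>z. \<phi> z * p z)" by (rule smooth2_mult[OF \<phi>(1) smooth2_polynomial[OF that]])
    from integral_mult_characteristic_increment[OF this \<phi>(2) _ pos q] \<phi>(3)
    show ?thesis by (simp add: algebra_simps)
  qed
qed

lemma integral_abs_increment_ge:
  assumes \<phi>: "smooth2 \<phi>" "compact K" "\<And>z. z \<notin> K \<Longrightarrow> \<phi> z = 0" and nonneg: "\<And>z. \<phi> z \<ge> 0"
    and pos: "\<And>z. z \<in> K \<Longrightarrow> fst z > q" and q: "q > 0"
  shows "(\<integral>z. \<bar>w z - k\<bar> * (\<phi> (z + q *\<^sub>R (1, lam)) - \<phi> z) \<partial>lborel)
       \<ge> - (\<integral>z. \<phi> z * sgn (w z - k) * source_integral q z \<partial>lborel)"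
proof -
  let ?v = "(1::real, lam)"
  have \<phi>_bcs: "bounded_compact_support \<phi>" by (rule smooth2_bounded_compact_support[OF \<phi>(1-3)])
  have shifted_measurable: "(\<lambda>z. \<bar>w (z - q *\<^sub>R ?v) - k\<bar>) \<in> borel_measurable borel"
    using borel_measurable_compose_continuous[OF borel_measurable_abs_w_minus, of "\<lambda>z. z - q *\<^sub>R ?v"]
    by (simp add: continuous_intros)
  have i1: "integrable lborel (\<lambda>z. \<phi> z * \<bar>w (z - q *\<^sub>R ?v) - k\<bar>)"
    by (rule integrable_bounded_compact_support[OF bounded_compact_support_mult(1)[OF \<phi>_bcs
          shifted_measurable abs_abs_w_minus_le]])
  have i2: "integrable lborel (\<lambda>z. \<phi> z * \<bar>w z - k\<bar>)"
    by (rule integrable_bounded_compact_support[OF bounded_compact_support_mult(1)[OF \<phi>_bcs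
          borel_measurable_abs_w_minus abs_abs_w_minus_le]])
  have shifted_bcs: "bounded_compact_support (\<lambda>z. \<phi> (z + q *\<^sub>R ?v) * \<bar>w z - k\<bar>)"
    by (rule bounded_compact_support_mult(1)[OF bounded_compact_support_translate[OF \<phi>_bcs]
          borel_measurable_abs_w_minus abs_abs_w_minus_le])
  note i3 = integrable_bounded_compact_support[OF shifted_bcs]
  have "(\<lambda>z. sgn (w z - k) * source_integral q z) \<in> borel_measurable borel"
    using w_measurable borel_measurable_source_integral by measurable
  moreover have "\<bar>sgn (w z - k) * source_integral q z\<bar> \<le> B * q" for z
    using abs_source_integral_le[of q z] q bound_nonneg by (simp add: abs_mult abs_sgn_eq)
  ultimately have i4: "integrable lborel (\<lambda>z. \<phi> z * sgn (w z - k) * source_integral q z)"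
    unfolding mult.assoc by (intro integrable_bounded_compact_support bounded_compact_support_mult(1)[OF \<phi>_bcs])
  have "AE z in lborel. \<phi> z * (w (z - q *\<^sub>R ?v) - w z + source_integral q z) = 0"
    using AE_characteristic_increment[OF \<phi>(1,2) _ pos q] \<phi>(3) by blast
  then have "AE z in lborel. - (\<phi> z * sgn (w z - k) * source_integral q z)
      \<le> \<phi> z * \<bar>w (z - q *\<^sub>R ?v) - k\<bar> - \<phi> z * \<bar>w z - k\<bar>"
    by (rule AE_mp) (intro AE_I2 impI abs_increment_ge nonneg)
  then have "(\<integral>z. - (\<phi> z * sgn (w z - k) * source_integral q z) \<partial>lborel)
      \<le> (\<integral>z. \<phi> z * \<bar>w (z - q *\<^sub>R ?v) - k\<bar> - \<phi> z * \<bar>w z - k\<bar> \<partial>lborel)"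
    using i1 i2 i4 by (intro integral_mono_AE) auto
  then have "- (\<integral>z. \<phi> z * sgn (w z - k) * source_integral q z \<partial>lborel)
      \<le> (\<integral>z. \<phi> z * \<bar>w (z - q *\<^sub>R ?v) - k\<bar> \<partial>lborel) - (\<integral>z. \<phi> z * \<bar>w z - k\<bar> \<partial>lborel)"
    using i1 i2 by simp
  also have "(\<integral>z. \<phi> z * \<bar>w (z - q *\<^sub>R ?v) - k\<bar> \<partial>lborel) = (\<integral>z. \<phi> (z + q *\<^sub>R ?v) * \<bar>w z - k\<bar> \<partial>lborel)"
    using lborel_integral_translate[OF bounded_compact_support_measurable[OF shifted_bcs], of "- (q *\<^sub>R ?v)"]
    by (simp only: diff_conv_add_uminus[symmetric] diff_add_cancel)
  also have "\<dots> - (\<integral>z. \<phi> z * \<bar>w z - k\<bar> \<partial>lborel) = (\<integral>z. \<bar>w z - k\<bar> * (\<phi> (z + q *\<^sub>R ?v) - \<phi> z) \<partial>lborel)"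
    using i3 i2 by (simp add: algebra_simps)
  finally show ?thesis .
qed

lemma source_quotient_tendsto:
  assumes Q: "bounded_compact_support Q" and q: "\<And>n. q n > 0" "q \<longlonglongrightarrow> 0"
  shows "(\<lambda>n. \<integral>z. Q z * source_integral (q n) z / q n \<partial>lborel) \<longlonglongrightarrow> (\<integral>z. Q z * S z \<partial>lborel)"
proof -
  obtain C K where QK: "C \<ge> 0" "\<And>z. \<bar>Q z\<bar> \<le> C" "compact K" "\<And>z. z \<notin> K \<Longrightarrow> Q z = 0"
    using Q by (rule bounded_compact_supportE) blast
  show ?thesis
  proof (rule integral_tendsto_along_lines[where K=K and C="C * B" and lam=lam])
    show "(\<lambda>z. Q z * source_integral (q n) z / q n) \<in> borel_measurable borel" for n
      using bounded_compact_support_measurable[OF Q] borel_measurable_source_integral by measurable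
    show "(\<lambda>z. Q z * S z) \<in> borel_measurable borel"
      using bounded_compact_support_measurable[OF Q] S_measurable by measurable
    show "\<bar>Q z * source_integral (q n) z / q n\<bar> \<le> C * B" for n z
      using abs_source_integral_le[of "q n" z] q(1)[of n] QK(1) QK(2)[of z] bound_nonneg
      by (simp add: abs_mult divide_le_eq mult_mono mult.assoc flip: times_divide_eq_right)
    show "\<bar>Q z * S z\<bar> \<le> C * B" for z
      using QK(1) QK(2)[of z] S_bounded[of z] by (simp add: abs_mult mult_mono)
    show "Q z * source_integral (q n) z / q n = 0" "Q z * S z = 0" if "z \<notin> K" for n z
      using QK(4)[OF that] by simp_all
    fix y
    define f where "f \<rho> = S (- \<rho>, y - lam * \<rho>)" for \<rho>
    have "f \<in> borel_measurable borel"
      unfolding f_def by (intro borel_measurable_compose_continuous[OF S_measurable] continuous_intros)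
    then obtain N where N: "negligible N" "\<And>x. x \<notin> N \<Longrightarrow>
        ((\<lambda>h. (\<integral>r. indicator {0..h} r * f (x + r) \<partial>lborel) / h) \<longlongrightarrow> f x) (at_right 0)"
      using lebesgue_differentiation_real S_bounded unfolding f_def by blast
    have along_line: "source_integral h (t, y + lam * t) = (\<integral>r. indicator {0..h} r * f (- t + r) \<partial>lborel)" for h t
      unfolding source_integral_def f_def by (intro Bochner_Integration.integral_cong) (auto simp: algebra_simps)
    have "filterlim q (at_right 0) sequentially"
      using q by (intro tendsto_imp_filterlim_at_right always_eventually) auto
    then have "(\<lambda>n. source_integral (q n) (t, y + lam * t) / q n) \<longlonglongrightarrow> S (t, y + lam * t)" if "- t \<notin> N" for t
      using filterlim_compose[OF N(2)[OF that]] unfolding along_line by (simp add: f_def)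
    then show "AE t in lborel. (\<lambda>n. Q (t, y + lam * t) * source_integral (q n) (t, y + lam * t) / q n)
        \<longlonglongrightarrow> Q (t, y + lam * t) * S (t, y + lam * t)"
      using AE_uminus_not_in_negligible[OF N(1)]
      by (elim AE_mp) (auto intro!: AE_I2 tendsto_mult_left simp: times_divide_eq_right[symmetric]
          simp del: times_divide_eq_right)
  qed (rule QK(3))
qed

lemma kruzhkov_integrable:
  assumes \<phi>: "smooth2 \<phi>" "partials \<phi> \<phi>t \<phi>x" "compact K" "\<And>z. z \<notin> K \<Longrightarrow> \<phi> z = 0"
  shows "integrable lborel (\<lambda>z. \<bar>w z - k\<bar> * (\<phi>t z + lam * \<phi>x z))"
    and "integrable lborel (\<lambda>z. sgn (w z - k) * S z * \<phi> z)"
proof -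
  have "continuous_on UNIV (\<lambda>z. \<phi>t z + lam * \<phi>x z)"
    using smooth2_partials[OF \<phi>(1,2)] by (intro continuous_intros smooth2_imp_continuous)
  moreover have "\<phi>t z + lam * \<phi>x z = 0" if "z \<notin> K" for z
    using partials_vanish_outside[OF \<phi>(2) compact_imp_closed[OF \<phi>(3)]] \<phi>(4) that by simp
  ultimately have "bounded_compact_support (\<lambda>z. \<phi>t z + lam * \<phi>x z)"
    by (rule bounded_compact_support_continuous[OF _ \<phi>(3)])
  then show "integrable lborel (\<lambda>z. \<bar>w z - k\<bar> * (\<phi>t z + lam * \<phi>x z))"
    by (rule integrable_bounded_compact_support[OF bounded_compact_support_mult(2)[OF _
          borel_measurable_abs_w_minus abs_abs_w_minus_le]])
  have "(\<lambda>z. sgn (w z - k) * S z) \<in> borel_measurable borel"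
    using w_measurable S_measurable by measurable
  moreover have "\<bar>sgn (w z - k) * S z\<bar> \<le> B" for z
    using S_bounded[of z] bound_nonneg by (simp add: abs_mult abs_sgn_eq)
  ultimately show "integrable lborel (\<lambda>z. sgn (w z - k) * S z * \<phi> z)"
    by (intro integrable_bounded_compact_support bounded_compact_support_mult(2)
        smooth2_bounded_compact_support[OF \<phi>(1,3,4)])
qed

theorem kruzhkov_inequality:
  assumes \<phi>: "smooth2 \<phi>" "compact_support_in \<phi> ({0<..} \<times> UNIV)" "partials \<phi> \<phi>t \<phi>x"
    and nonneg: "\<And>z. \<phi> z \<ge> 0"
  shows "(\<integral>z. \<bar>w z - k\<bar> * (\<phi>t z + lam * \<phi>x z) \<partial>lborel) + (\<integral>z. sgn (w z - k) * S z * \<phi> z \<partial>lborel) \<ge> 0"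
proof -
  obtain K \<delta> where K: "compact K" "\<And>z. z \<notin> K \<Longrightarrow> \<phi> z = 0" and \<delta>: "\<delta> > 0" "\<delta> \<le> 1"
    and pos: "\<And>z. z \<in> K \<Longrightarrow> fst z > \<delta>"
    using compact_support_in_pos_time[OF \<phi>(2)] by blast
  define q where "q n = \<delta> / real (Suc n)" for n
  have q: "q n > 0" "q n \<le> \<delta>" for n
    unfolding q_def using \<delta> by (auto simp: divide_le_eq)
  have "q \<longlonglongrightarrow> 0"
    unfolding q_def using LIMSEQ_Suc[OF lim_const_over_n[of \<delta>]] by simp
  have "- (\<integral>z. \<phi> z * sgn (w z - k) * source_integral (q n) z / q n \<partial>lborel)
      \<le> (\<integral>z. \<bar>w z - k\<bar> * (\<phi> (z + q n *\<^sub>R (1, lam)) - \<phi> z) / q n \<partial>lborel)" for n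
  proof -
    have "z \<in> K \<Longrightarrow> fst z > q n" for z using pos[of z] q(2)[of n] by linarith
    then have "- (\<integral>z. \<phi> z * sgn (w z - k) * source_integral (q n) z \<partial>lborel)
        \<le> (\<integral>z. \<bar>w z - k\<bar> * (\<phi> (z + q n *\<^sub>R (1, lam)) - \<phi> z) \<partial>lborel)"
      using integral_abs_increment_ge[OF \<phi>(1) K(1) _ nonneg _ q(1)] K(2) by blast
    then have "- (\<integral>z. \<phi> z * sgn (w z - k) * source_integral (q n) z \<partial>lborel) / q n
        \<le> (\<integral>z. \<bar>w z - k\<bar> * (\<phi> (z + q n *\<^sub>R (1, lam)) - \<phi> z) \<partial>lborel) / q n"
      by (rule divide_right_mono) (rule less_imp_le[OF q(1)])
    then show ?thesis by simp
  qed
  moreover have "(\<lambda>n. \<integral>z. \<phi> z * sgn (w z - k) * source_integral (q n) z / q n \<partial>lborel)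
      \<longlonglongrightarrow> (\<integral>z. \<phi> z * sgn (w z - k) * S z \<partial>lborel)"
    using w_measurable \<open>q \<longlonglongrightarrow> 0\<close> q(1)
    by (intro source_quotient_tendsto bounded_compact_support_mult(1)[OF
          smooth2_bounded_compact_support[OF \<phi>(1) K], where D=1]) (auto simp: abs_sgn_eq)
  moreover have "(\<lambda>n. \<integral>z. \<bar>w z - k\<bar> * (\<phi> (z + q n *\<^sub>R (1, lam)) - \<phi> z) / q n \<partial>lborel)
      \<longlonglongrightarrow> (\<integral>z. \<bar>w z - k\<bar> * (\<phi>t z + lam * \<phi>x z) \<partial>lborel)"
  proof -
    have "q n \<le> 1" for n using q(2)[of n] \<delta>(2) by linarith
    then show ?thesis
      using integral_shift_difference_quotient_tendsto[OF \<phi>(1,3) K(1) _ borel_measurable_abs_w_minus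
          abs_abs_w_minus_le q(1) _ \<open>q \<longlonglongrightarrow> 0\<close>, where v="(1, lam)"] K(2) by simp
  qed
  ultimately have "- (\<integral>z. \<phi> z * sgn (w z - k) * S z \<partial>lborel)
      \<le> (\<integral>z. \<bar>w z - k\<bar> * (\<phi>t z + lam * \<phi>x z) \<partial>lborel)"
    by (intro LIMSEQ_le[OF tendsto_minus]) auto
  then show ?thesis by (simp add: algebra_simps)
qed

end

section \<open>The relaxation source and the equilibrium curve\<close>

lemma G_diff_eq:
  assumes "c \<noteq> 0"
  shows "G c a b - G c k l = (a - k) * (- (2 * b - a - k) / (8 * c^2) - 1/2)
    + (b - l) * ((b + l - 2 * k) / (8 * c^2) - 1/2)"
  using assms unfolding G_def by (simp add: field_simps power2_eq_square)

lemma G_h_eq_0: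
  assumes "c > 0" "c^2 + 2 * k \<ge> 0"
  shows "G c k (h c k) = 0"
  using assms unfolding G_def h_def by (simp add: field_simps power2_eq_square)

lemma h_radicand_ge:
  fixes U c k :: real
  assumes "k \<ge> U * (U/2 - c)"
  shows "(c - U)^2 \<le> c^2 + 2 * k"
  using assms by (simp add: power2_eq_square algebra_simps)

lemma h_minus_le:
  assumes "0 \<le> U" "U < c" "k \<ge> U * (U/2 - c)"
  shows "h c k - k \<le> 2 * c * U"
proof -
  have "c - U \<le> sqrt (c^2 + 2 * k)" by (rule real_le_rsqrt[OF h_radicand_ge[OF assms(3)]])
  then have "c * (c - U) \<le> c * sqrt (c^2 + 2 * k)" using assms(1,2) by (intro mult_left_mono) auto
  then show ?thesis unfolding h_def by (simp add: power2_eq_square algebra_simps)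
qed

lemma sgn_add_sgn_mult_le_0:
  fixes X Y \<alpha> \<beta> :: real
  assumes "\<alpha> < 0" "\<beta> < 0"
  shows "(sgn X + sgn Y) * (X * \<alpha> + Y * \<beta>) \<le> 0"
  using assms mult_pos_neg[of X \<alpha>] mult_pos_neg[of Y \<beta>] mult_neg_neg[of X \<alpha>] mult_neg_neg[of Y \<beta>]
  unfolding sgn_if by (auto split: if_splits)

text \<open>Since \<open>G(k, h(k)) = 0\<close> and \<open>G\<close> is decreasing in both arguments on \<open>[m, M]\<^sup>2\<close>, \<open>G(a, b)\<close> has the sign
  opposite to \<open>a - k\<close> and \<open>b - h(k)\<close> whenever these agree in sign.\<close>

lemma sgn_sum_mult_G_nonpos:
  assumes U: "0 \<le> U" "U < c" and a: "a \<in> {U * (U/2 - c)..U * (U/2 + c)}"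
    and b: "b \<in> {U * (U/2 - c)..U * (U/2 + c)}" and k: "k \<in> {U * (U/2 - c)..U * (U/2 + c)}"
  shows "(sgn (a - k) + sgn (b - h c k)) * G c a b \<le> 0"
proof -
  have c: "c > 0" "8 * c^2 > 0" using U by auto
  have cU: "4 * c * U < 4 * c^2" using U c(1) by (simp add: power2_eq_square)
  have "G c a b = (a - k) * (- (2 * b - a - k) / (8 * c^2) - 1/2)
      + (b - h c k) * ((b + h c k - 2 * k) / (8 * c^2) - 1/2)"
    using G_diff_eq[of c a b k "h c k"] G_h_eq_0[OF c(1)] h_radicand_ge[of U c k] k c(1)
    by (simp add: order_trans[OF zero_le_power2])
  moreover have "- (2 * b - a - k) / (8 * c^2) - 1/2 < 0"
    using a b k cU c(2) by (simp add: divide_less_eq algebra_simps)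
  moreover have "(b + h c k - 2 * k) / (8 * c^2) - 1/2 < 0"
    using b k cU c(2) h_minus_le[OF U, of k] by (simp add: divide_less_eq algebra_simps)
  ultimately show ?thesis by (simp only: sgn_add_sgn_mult_le_0)
qed

lemma abs_G_le:
  assumes "c > 0" "\<bar>a\<bar> \<le> R" "\<bar>b\<bar> \<le> R"
  shows "\<bar>G c a b\<bar> \<le> R^2 / c^2 + R"
proof -
  have "\<bar>b - a\<bar> \<le> 2 * R" using assms(2,3) by linarith
  from power_mono[OF this abs_ge_zero, of 2] have "(b - a)^2 \<le> (2 * R)^2" by simp
  then have "((b - a) / (2 * c))^2 \<le> (2 * R)^2 / (2 * c)^2"
    unfolding power_divide using assms(1) by (intro divide_right_mono) auto
  then have "((b - a) / (2 * c))^2 \<le> R^2 / c^2"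
    by (simp add: power_mult_distrib)
  moreover have "\<bar>(a + b) / 2\<bar> \<le> R" using assms(2,3) by (simp add: abs_le_iff)
  ultimately show ?thesis
    using zero_le_power2[of "(b - a) / (2 * c)"] unfolding G_def abs_le_iff by linarith
qed

section \<open>The entropy inequality for the diagonal system\<close>

definition pos_time :: "(real \<times> real \<Rightarrow> real) \<Rightarrow> real \<times> real \<Rightarrow> real" where
  "pos_time f z = (if 0 < fst z then f z else 0)"

text \<open>A test function supported in \<open>t > 0\<close> does not see the initial datum, so a weak solution
  restricted to \<open>t > 0\<close> satisfies the hypotheses of the locale.\<close>

lemma weak_eq_imp_transport_weak_solution:
  assumes weak: "weak_eq lam w S w0"
    and measurable: "w \<in> borel_measurable lborel" "S \<in> borel_measurable lborel"
    and bounded: "\<And>z. fst z > 0 \<Longrightarrow> \<bar>w z\<bar> \<le> B" "\<And>z. fst z > 0 \<Longrightarrow> \<bar>S z\<bar> \<le> B" "B \<ge> 0"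
  shows "transport_weak_solution (pos_time w) (pos_time S) lam B"
proof
  have "fst \<in> borel_measurable (borel :: (real \<times> real) measure)"
    by (intro borel_measurable_continuous_onI continuous_intros)
  then show "pos_time w \<in> borel_measurable borel" "pos_time S \<in> borel_measurable borel"
    using measurable unfolding pos_time_def[abs_def] by simp_all
  show "\<bar>pos_time w z\<bar> \<le> B" "\<bar>pos_time S z\<bar> \<le> B" for z
    using bounded(1,2)[of z] bounded(3) by (auto simp: pos_time_def)
  fix \<psi> \<psi>t \<psi>x
  assume \<psi>: "smooth2 \<psi>" "compact_support_in \<psi> ({0<..} \<times> UNIV)" "partials \<psi> \<psi>t \<psi>x"
  obtain K where K: "compact K" "K \<subseteq> {0<..} \<times> UNIV" "\<And>z. z \<notin> K \<Longrightarrow> \<psi> z = 0"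
    using \<psi>(2) unfolding compact_support_in_def by blast
  have vanish: "\<psi>t z = 0" "\<psi>x z = 0" if "z \<notin> K" for z
    using partials_vanish_outside[OF \<psi>(3) compact_imp_closed[OF K(1)]] K(3) that by auto
  have "compact_support_in \<psi> UNIV" unfolding compact_support_in_def using K by blast
  with weak \<psi> have "(LINT z:{0..} \<times> UNIV|lborel. w z * \<psi>t z + lam * w z * \<psi>x z + S z * \<psi> z)
      + (LINT x|lborel. w0 x * \<psi> (0, x)) = 0"
    unfolding weak_eq_def by blast
  moreover have "\<psi> (0, x) = 0" for x using K by auto
  moreover have "(LINT z:{0..} \<times> UNIV|lborel. w z * \<psi>t z + lam * w z * \<psi>x z + S z * \<psi> z)
      = (\<integral>z. pos_time w z * \<psi>t z + lam * pos_time w z * \<psi>x z + pos_time S z * \<psi> z \<partial>lborel)"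
    unfolding set_lebesgue_integral_def
  proof (rule Bochner_Integration.integral_cong[OF refl])
    show "indicator ({0..} \<times> UNIV) z *\<^sub>R (w z * \<psi>t z + lam * w z * \<psi>x z + S z * \<psi> z)
        = pos_time w z * \<psi>t z + lam * pos_time w z * \<psi>x z + pos_time S z * \<psi> z" for z
      using K(2) vanish[of z] K(3)[of z] by (cases "z \<in> K") (auto simp: pos_time_def indicator_def)
  qed
  ultimately show "(\<integral>z. pos_time w z * \<psi>t z + lam * pos_time w z * \<psi>x z + pos_time S z * \<psi> z \<partial>lborel) = 0"
    by simp
qed

lemma diag_solution_imp_transport_weak_solutions:
  assumes sol: "diag_solution c \<epsilon> a0 b0 a b" and c: "c > 0" and \<epsilon>: "\<epsilon> > 0"
    and range: "\<And>z. fst z > 0 \<Longrightarrow> a z \<in> {m..M} \<and> b z \<in> {m..M}"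
  obtains B where
    "transport_weak_solution (pos_time a) (pos_time (\<lambda>z. G c (a z) (b z) / \<epsilon>)) (- c) B"
    "transport_weak_solution (pos_time b) (pos_time (\<lambda>z. G c (a z) (b z) / \<epsilon>)) c B"
proof -
  define R where "R = \<bar>m\<bar> + \<bar>M\<bar>"
  define B where "B = R + (R^2 / c^2 + R) / \<epsilon>"
  have R: "\<bar>a z\<bar> \<le> R" "\<bar>b z\<bar> \<le> R" if "fst z > 0" for z
    using range[OF that] unfolding R_def by auto
  have "R \<ge> 0" unfolding R_def by simp
  then have B: "B \<ge> 0" "R \<le> B" unfolding B_def using \<epsilon> by simp_all
  have "\<bar>G c (a z) (b z) / \<epsilon>\<bar> \<le> B" if "fst z > 0" for z
  proof -
    have "\<bar>G c (a z) (b z)\<bar> / \<epsilon> \<le> (R^2 / c^2 + R) / \<epsilon>"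
      using abs_G_le[OF c R[OF that]] \<epsilon> by (intro divide_right_mono) auto
    then show ?thesis using \<epsilon> \<open>R \<ge> 0\<close> unfolding B_def by simp
  qed
  moreover have "\<bar>a z\<bar> \<le> B" "\<bar>b z\<bar> \<le> B" if "fst z > 0" for z
    using R[OF that] B(2) by linarith+
  moreover have "a \<in> borel_measurable lborel" "b \<in> borel_measurable lborel"
    and "weak_eq (- c) a (\<lambda>z. G c (a z) (b z) / \<epsilon>) a0" "weak_eq c b (\<lambda>z. G c (a z) (b z) / \<epsilon>) b0"
    using sol unfolding diag_solution_def by auto
  moreover from this(1,2) have "(\<lambda>z. G c (a z) (b z) / \<epsilon>) \<in> borel_measurable lborel"
    unfolding G_def by measurable
  ultimately show ?thesis
    using B(1) by (intro that weak_eq_imp_transport_weak_solution) auto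
qed

lemma sgn_sum_mult_pos_time_G_nonpos:
  assumes U: "0 \<le> U" "U < c" and \<epsilon>: "\<epsilon> > 0" and k: "k \<in> {U * (U/2 - c)..U * (U/2 + c)}"
    and range: "\<And>z. fst z > 0 \<Longrightarrow> a z \<in> {U * (U/2 - c)..U * (U/2 + c)} \<and> b z \<in> {U * (U/2 - c)..U * (U/2 + c)}"
  shows "(sgn (pos_time a z - k) + sgn (pos_time b z - h c k)) * pos_time (\<lambda>z. G c (a z) (b z) / \<epsilon>) z \<le> 0"
proof (cases "fst z > 0")
  case True
  then have "(sgn (a z - k) + sgn (b z - h c k)) * G c (a z) (b z) / \<epsilon> \<le> 0"
    using sgn_sum_mult_G_nonpos[OF U _ _ k] range \<epsilon> by (intro divide_nonpos_pos) auto
  with True show ?thesis by (simp add: pos_time_def)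
qed (simp add: pos_time_def)

lemma entropy_inequality_pair:
  assumes Ta: "transport_weak_solution (pos_time a) S (- c) B"
    and Tb: "transport_weak_solution (pos_time b) S c B"
    and \<phi>: "smooth2 \<phi>" "compact_support_in \<phi> ({0<..} \<times> UNIV)" "partials \<phi> \<phi>t \<phi>x" "\<And>z. \<phi> z \<ge> 0"
    and sign: "\<And>z. (sgn (pos_time a z - k) + sgn (pos_time b z - l)) * S z \<le> 0"
  shows "(LINT z:{0<..} \<times> UNIV|lborel.
      (\<bar>a z - k\<bar> + \<bar>b z - l\<bar>) * \<phi>t z - c * (\<bar>a z - k\<bar> - \<bar>b z - l\<bar>) * \<phi>x z) \<ge> 0"
proof -
  interpret A: transport_weak_solution "pos_time a" S "- c" B by (rule Ta)
  interpret B: transport_weak_solution "pos_time b" S c B by (rule Tb)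
  obtain K where K: "compact K" "K \<subseteq> {0<..} \<times> UNIV" "\<And>z. z \<notin> K \<Longrightarrow> \<phi> z = 0"
    using \<phi>(2) unfolding compact_support_in_def by blast
  have vanish: "\<phi>t z = 0" "\<phi>x z = 0" if "z \<notin> K" for z
    using partials_vanish_outside[OF \<phi>(3) compact_imp_closed[OF K(1)]] K(3) that by auto
  define Xa where "Xa z = \<bar>pos_time a z - k\<bar> * (\<phi>t z + - c * \<phi>x z)" for z
  define Xb where "Xb z = \<bar>pos_time b z - l\<bar> * (\<phi>t z + c * \<phi>x z)" for z
  define Ya where "Ya z = sgn (pos_time a z - k) * S z * \<phi> z" for z
  define Yb where "Yb z = sgn (pos_time b z - l) * S z * \<phi> z" for z
  have integrable: "integrable lborel Xa" "integrable lborel Ya" "integrable lborel Xb" "integrable lborel Yb"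
    unfolding Xa_def[abs_def] Ya_def[abs_def] Xb_def[abs_def] Yb_def[abs_def]
    using A.kruzhkov_integrable[OF \<phi>(1,3) K(1) _, of k] B.kruzhkov_integrable[OF \<phi>(1,3) K(1) _, of l] K(3)
    by blast+
  have "integral\<^sup>L lborel Ya + integral\<^sup>L lborel Yb = (\<integral>z. (sgn (pos_time a z - k) + sgn (pos_time b z - l)) * S z * \<phi> z \<partial>lborel)"
    using integrable(2,4) unfolding Ya_def Yb_def by (simp add: algebra_simps)
  also have "\<dots> \<le> 0"
  proof -
    have "0 \<le> (\<integral>z. - ((sgn (pos_time a z - k) + sgn (pos_time b z - l)) * S z * \<phi> z) \<partial>lborel)"
      using sign \<phi>(4) by (intro Bochner_Integration.integral_nonneg) (simp add: mult_nonpos_nonneg)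
    then show ?thesis by simp
  qed
  finally have "integral\<^sup>L lborel Ya + integral\<^sup>L lborel Yb \<le> 0" .
  moreover have "integral\<^sup>L lborel Xa + integral\<^sup>L lborel Ya \<ge> 0" "integral\<^sup>L lborel Xb + integral\<^sup>L lborel Yb \<ge> 0"
    using A.kruzhkov_inequality[OF \<phi>(1-3,4), of k] B.kruzhkov_inequality[OF \<phi>(1-3,4), of l]
    unfolding Xa_def[abs_def] Ya_def[abs_def] Xb_def[abs_def] Yb_def[abs_def] by simp_all
  moreover have "(LINT z:{0<..} \<times> UNIV|lborel.
      (\<bar>a z - k\<bar> + \<bar>b z - l\<bar>) * \<phi>t z - c * (\<bar>a z - k\<bar> - \<bar>b z - l\<bar>) * \<phi>x z)
      = integral\<^sup>L lborel Xa + integral\<^sup>L lborel Xb"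
    unfolding set_lebesgue_integral_def Bochner_Integration.integral_add[OF integrable(1,3), symmetric]
  proof (rule Bochner_Integration.integral_cong[OF refl])
    show "indicator ({0<..} \<times> UNIV) z *\<^sub>R ((\<bar>a z - k\<bar> + \<bar>b z - l\<bar>) * \<phi>t z
        - c * (\<bar>a z - k\<bar> - \<bar>b z - l\<bar>) * \<phi>x z) = Xa z + Xb z" for z
      using K(2) vanish[of z] unfolding Xa_def Xb_def
      by (cases "z \<in> K") (auto simp: pos_time_def indicator_def algebra_simps)
  qed
  ultimately show ?thesis by linarith
qed

lemma esssup_abs_nonneg: "esssup lborel (\<lambda>x::real. ereal \<bar>f x\<bar>) \<ge> 0"
proof -
  have "esssup lborel (\<lambda>x::real. 0::ereal) \<le> esssup lborel (\<lambda>x. ereal \<bar>f x\<bar>)"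
    by (rule esssup_mono) auto
  moreover have "esssup lborel (\<lambda>x::real. 0::ereal) = 0" by (rule esssup_const) simp
  ultimately show ?thesis by simp
qed

theorem mainTheorem3:
  fixes u0 :: "real \<Rightarrow> real" and c \<epsilon> U m M :: real
    and a b :: "real \<times> real \<Rightarrow> real"
  assumes u0_meas: "u0 \<in> borel_measurable lborel"
    and U_def: "ereal U = esssup lborel (\<lambda>x. ereal \<bar>u0 x\<bar>)"
    and u0_BV: "BV u0"
    and c_gt: "c > U"
    and eps_pos: "\<epsilon> > 0"
    and m_def: "m = U * (U/2 - c)"
    and M_def: "M = U * (U/2 + c)"
    and sol: "diag_solution c \<epsilon> (\<lambda>x. (u0 x)^2/2 - c * u0 x) (\<lambda>x. (u0 x)^2/2 + c * u0 x) a b"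
    and range_a: "\<forall>t x. t > 0 \<longrightarrow> a (t, x) \<in> {m..M}"
    and range_b: "\<forall>t x. t > 0 \<longrightarrow> b (t, x) \<in> {m..M}"
  shows "\<forall>k \<in> {m..M}. \<forall>\<phi> \<phi>t \<phi>x.
           smooth2 \<phi> \<and> compact_support_in \<phi> ({0<..} \<times> UNIV) \<and> partials \<phi> \<phi>t \<phi>x
           \<and> (\<forall>z. \<phi> z \<ge> 0) \<longrightarrow>
           (LINT z:{0<..} \<times> UNIV|lborel.
              (\<bar>a z - k\<bar> + \<bar>b z - h c k\<bar>) * \<phi>t z
              - c * (\<bar>a z - k\<bar> - \<bar>b z - h c k\<bar>) * \<phi>x z) \<ge> 0"
proof (intro ballI allI impI, elim conjE)
  fix k \<phi> \<phi>t \<phi>x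
  assume k: "k \<in> {m..M}" and \<phi>: "smooth2 \<phi>" "compact_support_in \<phi> ({0<..} \<times> UNIV)"
    "partials \<phi> \<phi>t \<phi>x" "\<forall>z. 0 \<le> \<phi> z"
  have U: "0 \<le> U" "U < c" using U_def esssup_abs_nonneg[of u0] c_gt by (simp_all flip: U_def)
  then have "c > 0" by linarith
  have range: "fst z > 0 \<Longrightarrow> a z \<in> {m..M} \<and> b z \<in> {m..M}" for z
    using range_a range_b by (cases z) auto
  obtain B where
    Ta: "transport_weak_solution (pos_time a) (pos_time (\<lambda>z. G c (a z) (b z) / \<epsilon>)) (- c) B" and
    Tb: "transport_weak_solution (pos_time b) (pos_time (\<lambda>z. G c (a z) (b z) / \<epsilon>)) c B"
    using diag_solution_imp_transport_weak_solutions[OF sol \<open>c > 0\<close> eps_pos range] by blast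
  show "(LINT z:{0<..} \<times> UNIV|lborel.
      (\<bar>a z - k\<bar> + \<bar>b z - h c k\<bar>) * \<phi>t z - c * (\<bar>a z - k\<bar> - \<bar>b z - h c k\<bar>) * \<phi>x z) \<ge> 0"
    using sgn_sum_mult_pos_time_G_nonpos[OF U eps_pos] k range \<phi>(4) unfolding m_def M_def
    by (intro entropy_inequality_pair[OF Ta Tb \<phi>(1-3)]) auto
qed

end
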